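(* Let $m\ge 2$, $d\ge1$ be integers, $n=md$, $a,c>0$, $q=\frac{ad}{2c}+1$. Let $G$ be the $n\times n$ matrix with $G_{ij}=\frac{n^2-1-6|i-j|(n-|i-j|)}{12cn}$, let $\Pi$ be the $n\times\binom m2$ matrix with columns $\sqrt{a/m}\,(e_{1+(i-1)d}-e_{1+(j-1)d})$, $1\le i<j\le m$, and let $M=G-G\Pi(I+\Pi^\top G\Pi)^{-1}\Pi^\top G$. Then $M$ is the block Toeplitz (block circulant) matrix whose $d\times d$ block in block position $(r,s)$ is $M_{((s-r)\bmod m)+1}$, where for $k=1,\dots,m$, $i=1,\dots,d$, $h=0,\dots,d-1$, writing $\ell=|i-1-(k-1)d-h|$, $$\begin{aligned}(M_k)_{i,h+1}=\frac{1}{2cn}\Biggl(&-\ell(n-\ell)+\frac{1}{T_m(q)-1}\Bigl[n(h-i+1)\bigl(V_{k-1}(q)-V_{m-k}(q)\bigr)-\Bigl(\tfrac{an}{c}(i-1)(h-d)-nd\Bigr)\bigl(U_{k-2}(q)+U_{m-k}(q)\bigr)\\&-\tfrac{2cd}{a}\bigl(V_{m-1}(q)-1\bigr)-d^2U_{m-1}(q)\Bigr]+dh+nh-nd+(2kd-3d+2h-n)(i-1)+kd(n-2h)-d^2(k-1)^2\Biggr)+\frac{d^2-1}{12cn}.\end{aligned}$$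
   Context: $e_j$ is the $j$-th standard basis vector of $\mathbb R^n$; $I$ is the identity of size $\binom m2$. ($G$ is the group inverse of the Laplacian of the $n$-cycle with conductances $c$.) $T_k,U_k$ are the Chebyshev polynomials of the first and second kind ($T_0=1,T_1=x,U_0=1,U_1=2x$, recurrence $p_{k+1}=2xp_k-p_{k-1}$), $U_{-1}=0$; $V_k$ are those of the third kind ($V_0=1$, $V_1=2x-1$, $V_{k+1}=2xV_k-V_{k-1}$). *)

theory Defs
  imports Complex_Main "Jordan_Normal_Form.Matrix" "Jordan_Normal_Form.Gauss_Jordan_Elimination"
begin

fun chebT :: "nat \<Rightarrow> real \<Rightarrow> real" where
  "chebT 0 x = 1"
| "chebT (Suc 0) x = x"
| "chebT (Suc (Suc k)) x = 2 * x * chebT (Suc k) x - chebT k x"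

fun chebU :: "nat \<Rightarrow> real \<Rightarrow> real" where
  "chebU 0 x = 1"
| "chebU (Suc 0) x = 2 * x"
| "chebU (Suc (Suc k)) x = 2 * x * chebU (Suc k) x - chebU k x"

fun chebV :: "nat \<Rightarrow> real \<Rightarrow> real" where
  "chebV 0 x = 1"
| "chebV (Suc 0) x = 2 * x - 1"
| "chebV (Suc (Suc k)) x = 2 * x * chebV (Suc k) x - chebV k x"

definition chebU_int :: "int \<Rightarrow> real \<Rightarrow> real" where
  "chebU_int k x = (if k < 0 then 0 else chebU (nat k) x)"

(* G: group inverse of the Laplacian of the n-cycle with conductance c (0-indexed) *)
definition Gmat :: "nat \<Rightarrow> real \<Rightarrow> real mat" where
  "Gmat n c = mat n n (\<lambda>(i,j).
     (real n ^ 2 - 1 - 6 * real (nat \<bar>int i - int j\<bar>) * (real n - real (nat \<bar>int i - int j\<bar>)))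
       / (12 * c * real n))"

definition pairs :: "nat \<Rightarrow> (nat \<times> nat) list" where
  "pairs m = [(i,j). j \<leftarrow> [0..<m], i \<leftarrow> [0..<j]]"

(* Pi: n x binom(m,2) matrix, column for pair (i,j) is sqrt(a/m) (e_{1+(i-1)d} - e_{1+(j-1)d})
   (in 0-indexed form: rows i*d and j*d) *)
definition Pimat :: "nat \<Rightarrow> nat \<Rightarrow> real \<Rightarrow> real mat" where
  "Pimat m d a = mat (m * d) (m choose 2) (\<lambda>(r,p).
     (let (i,j) = pairs m ! p in
       sqrt (a / real m) * ((if r = i * d then 1 else 0) - (if r = j * d then 1 else 0))))"

definition Mmat :: "nat \<Rightarrow> nat \<Rightarrow> real \<Rightarrow> real \<Rightarrow> real mat" where
  "Mmat m d a c = (let n = m * d; G = Gmat n c; P = Pimat m d a;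
       X = the (mat_inverse (1\<^sub>m (m choose 2) + transpose_mat P * G * P))
     in G - G * P * X * transpose_mat P * G)"

(* (M_k)_{i,h+1}, with k \<in> {1..m}, i \<in> {1..d}, h \<in> {0..d-1} as in the paper *)
definition blockEntry :: "nat \<Rightarrow> nat \<Rightarrow> real \<Rightarrow> real \<Rightarrow> nat \<Rightarrow> nat \<Rightarrow> nat \<Rightarrow> real" where
  "blockEntry m d a c k i h = (let n = real (m * d); dd = real d; q = a * dd / (2 * c) + 1;
     l = real (nat \<bar>int i - 1 - (int k - 1) * int d - int h\<bar>);
     ii = real i; hh = real h; kk = real k in
     (1 / (2 * c * n)) * (- l * (n - l)
        + (1 / (chebT m q - 1)) *
          (n * (hh - ii + 1) * (chebV (k - 1) q - chebV (m - k) q)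
           - ((a * n / c) * (ii - 1) * (hh - dd) - n * dd) * (chebU_int (int k - 2) q + chebU (m - k) q)
           - (2 * c * dd / a) * (chebV (m - 1) q - 1)
           - dd ^ 2 * chebU (m - 1) q)
        + dd * hh + n * hh - n * dd + (2 * kk * dd - 3 * dd + 2 * hh - n) * (ii - 1)
        + kk * dd * (n - 2 * hh) - dd ^ 2 * (kk - 1) ^ 2)
     + (dd ^ 2 - 1) / (12 * c * n))"

end

theory Submission
  imports Defs "Jordan_Normal_Form.Determinant"
begin

text \<open>Let \<open>L\<close> be the Laplacian of the \<open>n\<close>-cycle with conductance \<open>c\<close> and \<open>J\<close> the all-ones matrix, so
  that \<open>G L = I - J/n\<close> and \<open>G J = 0\<close>. Any \<open>N\<close> with \<open>(L + \<Pi> \<Pi>\<^sup>T) N = I - J/n\<close> and \<open>J N = 0\<close> then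
  satisfies \<open>N + G \<Pi> \<Pi>\<^sup>T N = G\<close>, and the push-through form of the Woodbury identity turns this
  into \<open>M = N\<close>. Both equations are checked for the block matrix \<open>N\<close> of the statement. Each entry
  of \<open>N\<close> is the entry of \<open>G\<close> at the same position plus a smooth part that is affine in the row
  index inside every block; the Chebyshev recurrence at \<open>q = 1 + a d / (2 c)\<close> glues the smooth
  parts of consecutive blocks together, so \<open>L N\<close> agrees with \<open>L G\<close> except in the rows \<open>r d\<close> seen by
  \<open>\<Pi>\<close>, where the defect is cancelled by \<open>\<Pi> \<Pi>\<^sup>T N\<close> thanks to \<open>T\<^sub>m = q U\<^sub>m\<^sub>-\<^sub>1 - U\<^sub>m\<^sub>-\<^sub>2\<close> and
  the closed form of \<open>\<Sum> U\<^sub>j\<close>. The columns of \<open>N\<close> sum to zero because those of \<open>G\<close> do and the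
  smooth parts add up to zero.\<close>

section \<open>Chebyshev polynomials with integer index\<close>

definition chebV_int :: "int \<Rightarrow> real \<Rightarrow> real" where
  "chebV_int j x = chebU_int j x - chebU_int (j - 1) x"

lemma chebU_int_minus_one [simp]: "chebU_int (-1) x = 0"
  by (simp add: chebU_int_def)

lemma chebU_int_zero [simp]: "chebU_int 0 x = 1"
  by (simp add: chebU_int_def)

lemma chebU_int_of_nat [simp]: "chebU_int (int k) x = chebU k x"
  by (simp add: chebU_int_def)

lemma chebU_int_rec:
  assumes "j \<ge> 0"
  shows "chebU_int (j + 1) x = 2 * x * chebU_int j x - chebU_int (j - 1) x"
proof -
  obtain k where k: "j = int k"
    using assms nonneg_eq_int by blast
  show ?thesis
  proof (cases k)
    case 0
    then show ?thesis using k by (simp add: chebU_int_def)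
  next
    case (Suc l)
    then have "j + 1 = int (Suc (Suc l))" "j = int (Suc l)" "j - 1 = int l"
      using k by auto
    then show ?thesis by (simp only: chebU_int_of_nat chebU.simps)
  qed
qed

lemma chebU_int_rec':
  assumes "j \<ge> 1"
  shows "chebU_int j x = 2 * x * chebU_int (j - 1) x - chebU_int (j - 2) x"
  using chebU_int_rec[of "j - 1" x] assms by (simp add: algebra_simps)

lemma chebV_eq_chebV_int: "chebV k x = chebV_int (int k) x"
proof (induction k x rule: chebV.induct)
  case (3 k x)
  have "int (Suc k) - 1 = int k" "int (Suc (Suc k)) - 1 = int (Suc k)"
    by auto
  moreover have "chebU_int (int (Suc (Suc k))) x = 2 * x * chebU_int (int (Suc k)) x - chebU_int (int k) x"
    using chebU_int_rec[of "int (Suc k)" x] by (simp add: add.commute)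
  moreover have "chebU_int (int (Suc k)) x = 2 * x * chebU_int (int k) x - chebU_int (int k - 1) x"
    using chebU_int_rec[of "int k" x] by (simp add: add.commute)
  ultimately show ?case
    using 3 unfolding chebV_int_def by (simp only: chebV.simps) (simp add: algebra_simps)
qed (simp_all add: chebV_int_def chebU_int_def)

lemma chebT_Suc_eq_chebU_int: "chebT (Suc k) x = x * chebU_int (int k) x - chebU_int (int k - 1) x"
proof (induction k rule: less_induct)
  case (less k)
  show ?case
  proof (cases k)
    case (Suc l)
    show ?thesis
    proof (cases l)
      case (Suc p)
      have "l < k" "p < k"
        using \<open>k = Suc l\<close> Suc by simp_all
      note IH = less.IH[OF this(1)] less.IH[OF this(2)]
      have T: "chebT (Suc k) x = 2 * x * chebT (Suc l) x - chebT (Suc p) x"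
        using \<open>k = Suc l\<close> Suc by simp
      have U: "chebU_int (int k) x = 2 * x * chebU_int (int l) x - chebU_int (int p) x"
              "chebU_int (int k - 1) x = 2 * x * chebU_int (int l - 1) x - chebU_int (int p - 1) x"
        using chebU_int_rec[of "int l" x] chebU_int_rec[of "int l - 1" x] \<open>k = Suc l\<close> Suc
        by (simp_all add: algebra_simps)
      show ?thesis
        unfolding T IH U by (simp add: algebra_simps)
    qed (use \<open>k = Suc l\<close> in \<open>simp add: chebU_int_def\<close>)
  qed simp
qed

lemma chebT_strict_mono_gt_one:
  assumes "x > 1"
  shows "1 \<le> chebT k x \<and> chebT k x < chebT (Suc k) x"
proof (induction k rule: less_induct)
  case (less k)
  show ?case
  proof (cases k)
    case (Suc l)
    with less have IH: "1 \<le> chebT l x" "chebT l x < chebT (Suc l) x"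
      by simp_all
    have "2 * 1 * chebT (Suc l) x < 2 * x * chebT (Suc l) x"
      using assms IH by (intro mult_strict_right_mono) auto
    moreover have "chebT (Suc (Suc l)) x = 2 * x * chebT (Suc l) x - chebT l x"
      by simp
    ultimately have "chebT (Suc l) x < chebT (Suc (Suc l)) x"
      using IH by linarith
    with IH Suc show ?thesis
      by simp
  qed (use assms in simp)
qed

lemma chebT_gt_one:
  assumes "x > 1" "k \<ge> 1"
  shows "chebT k x > 1"
  using chebT_strict_mono_gt_one[OF assms(1), of "k - 1"] assms(2) by simp

lemma sum_chebU_int:
  "(\<Sum>j<k. chebU_int (int j) x) * (2 * (x - 1)) = chebU_int (int k) x - chebU_int (int k - 1) x - 1"
proof (induction k)
  case (Suc k)
  have "chebU_int (int (Suc k)) x = 2 * x * chebU_int (int k) x - chebU_int (int k - 1) x"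
    using chebU_int_rec[of "int k" x] by (simp add: add.commute)
  with Suc show ?case
    by (simp add: algebra_simps)
qed simp

lemma sum_chebU_int_pred:
  "(\<Sum>j<k. chebU_int (int j - 1) x) = (\<Sum>j<k. chebU_int (int j) x) - chebU_int (int k - 1) x"
  by (induction k) auto

lemma sum_of_nat_lessThan: "(\<Sum>j<k. real j) = real k * (real k - 1) / 2"
  by (induction k) (auto simp: field_simps)

lemma sum_of_nat_square_lessThan: "(\<Sum>j<k. (real j)^2) = (real k - 1) * real k * (2 * real k - 1) / 6"
  by (induction k) (auto simp: field_simps power2_eq_square)

lemma sum_affine_lessThan: "(\<Sum>t<k. f0 + real t * f1) = real k * f0 + (real k * (real k - 1) / 2) * f1"
  by (simp add: sum.distrib sum_distrib_right[symmetric] sum_of_nat_lessThan)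

lemma sum_lessThan_reflect: "(\<Sum>j<k. f (int k - 1 - int j)) = (\<Sum>j<k. f (int j))"
proof -
  have "(\<Sum>j<k. f (int j)) = (\<Sum>j\<in>{0..<k}. f (int (k + 0 - Suc j)))"
    by (subst sum.atLeastLessThan_rev) (simp add: atLeast0LessThan)
  also have "\<dots> = (\<Sum>j<k. f (int k - 1 - int j))"
    by (rule sum.cong) (auto simp: atLeast0LessThan of_nat_diff intro!: arg_cong[where f=f])
  finally show ?thesis by simp
qed

lemma sum_lessThan_mult_blocks:
  fixes f :: "nat \<Rightarrow> 'a::comm_monoid_add"
  shows "(\<Sum>x<m * d. f x) = (\<Sum>j<m. \<Sum>t<d. f (j * d + t))"
proof -
  have "(\<Sum>x<m * d. f x) = (\<Sum>j<m. sum f {j * d..<j * d + d})"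
    by (rule sum.nat_group[symmetric])
  also have "\<dots> = (\<Sum>j<m. \<Sum>t<d. f (j * d + t))"
  proof (rule sum.cong[OF refl])
    fix j
    have "sum f {0 + j * d..<d + j * d} = (\<Sum>t\<in>{0..<d}. f (t + j * d))"
      by (rule sum.shift_bounds_nat_ivl)
    then show "sum f {j * d..<j * d + d} = (\<Sum>t<d. f (j * d + t))"
      by (simp add: atLeast0LessThan add.commute)
  qed
  finally show ?thesis .
qed

lemma sum_lessThan_mod_reflect:
  assumes "n > 0"
  shows "(\<Sum>z<n. f (nat ((s - int z) mod int n))) = (\<Sum>z<n. f z)"
proof -
  have inv: "nat ((s - int (nat ((s - int z) mod int n))) mod int n) = z" if "z < n" for z
  proof -
    have "(s - (s - int z) mod int n) mod int n = (s - (s - int z)) mod int n"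
      by (simp add: mod_diff_right_eq)
    with that assms show ?thesis by simp
  qed
  show ?thesis
    by (rule sum.reindex_bij_witness[where i="\<lambda>z. nat ((s - int z) mod int n)"
          and j="\<lambda>z. nat ((s - int z) mod int n)"]) (use assms inv in \<open>auto simp: nat_less_iff\<close>)
qed

lemma sum_lessThan_indicator:
  assumes "(w::nat) < n"
  shows "(\<Sum>z<n. (if z = w then 1 else 0) * (f z :: real)) = f w"
proof -
  have "(\<Sum>z<n. (if z = w then 1 else 0) * f z) = (\<Sum>z<n. if z = w then f z else 0)"
    by (rule sum.cong) auto
  with assms show ?thesis
    by (simp add: sum.delta)
qed

lemma mod_mult_block:
  fixes A t d m :: nat
  assumes "t < d"
  shows "(A * d + t) mod (m * d) = (A mod m) * d + t"
proof (cases "m = 0")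
  case False
  have "A * d + t = (A div m * m + A mod m) * d + t"
    by simp
  also have "\<dots> = ((A mod m) * d + t) + (A div m) * (m * d)"
    by (simp only: add_mult_distrib add_mult_distrib2 ac_simps)
  finally have "A * d + t = ((A mod m) * d + t) + (A div m) * (m * d)" .
  moreover have "(A mod m) * d + t < m * d"
  proof -
    have "(A mod m + 1) * d \<le> m * d"
      using False by (intro mult_right_mono) (simp_all add: Suc_leI)
    with assms show ?thesis
      by (simp add: algebra_simps)
  qed
  ultimately show ?thesis
    by (simp only: mod_mult_self1 mod_less)
qed simp

lemma row_succ_mod:
  fixes r t d m :: nat
  assumes "r < m" "t < d"
  shows "(r * d + t + 1) mod (m * d) = (if t + 1 < d then r * d + (t + 1) else ((r + 1) mod m) * d)"
proof (cases "t + 1 < d")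
  case True
  then have "(r * d + (t + 1)) mod (m * d) = r * d + (t + 1)"
    using mod_mult_block[of "t + 1" d r m] assms(1) by simp
  with True show ?thesis
    by (simp add: add.assoc)
next
  case False
  with assms(2) have "r * d + t + 1 = (r + 1) * d + 0"
    by simp
  then have "(r * d + t + 1) mod (m * d) = ((r + 1) * d + 0) mod (m * d)"
    by (rule arg_cong)
  also have "\<dots> = ((r + 1) mod m) * d"
    using mod_mult_block[of 0 d "r + 1" m] assms(2) by simp
  finally have "(r * d + t + 1) mod (m * d) = ((r + 1) mod m) * d" .
  with False show ?thesis
    by simp
qed

lemma row_pred_mod:
  fixes r t d m :: nat
  assumes "r < m" "t < d"
  shows "(r * d + t + m * d - 1) mod (m * d)
    = (if t = 0 then ((r + m - 1) mod m) * d + (d - 1) else r * d + (t - 1))"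
proof (cases "t = 0")
  case True
  have "r * d + m * d - 1 = (r + m - 1) * d + (d - 1)"
  proof -
    have "(r + m - 1) * d + d = (r + m) * d"
      using assms(1) by (cases "r + m") simp_all
    then have "r * d + m * d = (r + m - 1) * d + d"
      by (simp add: add_mult_distrib)
    then show ?thesis
      using assms(2) by simp
  qed
  then show ?thesis
    using True mod_mult_block[of "d - 1" d "r + m - 1" m] assms(2) by simp
next
  case False
  then have "r * d + t + m * d - 1 = (r + m) * d + (t - 1)"
    by (simp add: algebra_simps)
  then show ?thesis
    using False mod_mult_block[of "t - 1" d "r + m" m] assms by simp
qed

lemma block_row_less:
  fixes r t d m :: nat
  assumes "r < m" "t < d"
  shows "r * d + t < m * d"
proof -
  have "r * d + t < (r + 1) * d"
    using assms(2) by simp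
  also have "\<dots> \<le> m * d"
    using assms(1) by (intro mult_right_mono) auto
  finally show ?thesis .
qed

lemma index_mult_mat_sum:
  assumes "A \<in> carrier_mat nr nc" "B \<in> carrier_mat nc k" "i < nr" "j < k"
  shows "(A * B) $$ (i, j) = (\<Sum>l<nc. A $$ (i, l) * B $$ (l, j))"
  using assms by (simp add: scalar_prod_def atLeast0LessThan)

lemma the_mat_inverse_left:
  fixes A :: "'a::field mat"
  assumes A: "A \<in> carrier_mat n n" and B: "B \<in> carrier_mat n n" and AB: "A * B = 1\<^sub>m n"
  shows "the (mat_inverse A) \<in> carrier_mat n n \<and> the (mat_inverse A) * A = 1\<^sub>m n"
proof -
  have "B * A = 1\<^sub>m n"
    by (rule mat_mult_left_right_inverse[OF A B AB])
  with A B AB have "A \<in> Units (ring_mat TYPE('a) n undefined)"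
    unfolding Units_def ring_mat_def by auto
  then obtain X where "mat_inverse A = Some X"
    using mat_inverse(1)[OF A] by fastforce
  with mat_inverse(2)[OF A this] show ?thesis
    by simp
qed

lemma mat_inverse_push_through:
  fixes G N :: "'a::field mat"
  assumes G: "G \<in> carrier_mat n n" and P: "P \<in> carrier_mat n b" and Q: "Q \<in> carrier_mat b n"
    and N: "N \<in> carrier_mat n n" and sol: "N + G * (P * (Q * N)) = G"
  shows "the (mat_inverse (1\<^sub>m b + Q * G * P)) \<in> carrier_mat b b
    \<and> the (mat_inverse (1\<^sub>m b + Q * G * P)) * (Q * G) = Q * N"
proof -
  define A W X where "A = 1\<^sub>m b + Q * G * P" and "W = Q * N" and "X = the (mat_inverse A)"
  have A: "A \<in> carrier_mat b b" and W: "W \<in> carrier_mat b n"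
    using G P Q N by (auto simp: A_def W_def)
  have AW: "A * W = Q * G"
  proof -
    have QG: "Q * G \<in> carrier_mat b n" and PW: "P * W \<in> carrier_mat n n"
      using G P Q W by auto
    have "A * W = 1\<^sub>m b * W + (Q * G * P) * W"
      unfolding A_def using QG P W by (intro add_mult_distrib_mat) auto
    also have "(Q * G * P) * W = Q * (G * (P * W))"
      using assoc_mult_mat[OF QG P W] assoc_mult_mat[OF Q G PW] by simp
    also have "1\<^sub>m b * W + Q * (G * (P * W)) = Q * (N + G * (P * (Q * N)))"
      using Q N G PW unfolding W_def by (simp add: mult_add_distrib_mat)
    finally show ?thesis
      unfolding sol .
  qed
  have "A * (1\<^sub>m b - W * P) = A * 1\<^sub>m b - A * (W * P)"
    using A W P by (intro mult_minus_distrib_mat) auto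
  also have "\<dots> = A - Q * G * P"
    using A W P by (simp flip: AW)
  also have "\<dots> = 1\<^sub>m b"
    unfolding A_def using G P Q by (intro eq_matI) auto
  finally have "A * (1\<^sub>m b - W * P) = 1\<^sub>m b" .
  moreover have "1\<^sub>m b - W * P \<in> carrier_mat b b"
    using W P by auto
  ultimately have X: "X \<in> carrier_mat b b" and XA: "X * A = 1\<^sub>m b"
    using the_mat_inverse_left[OF A] unfolding X_def by blast+
  have "X * (A * W) = (X * A) * W"
    using X A W by (simp add: assoc_mult_mat)
  then show ?thesis
    unfolding AW XA A_def[symmetric] X_def[symmetric] using X left_mult_one_mat[OF W] by (simp add: W_def)
qed

lemma woodbury_by_solution:
  fixes G N :: "'a::field mat"
  assumes G: "G \<in> carrier_mat n n" and P: "P \<in> carrier_mat n b" and Q: "Q \<in> carrier_mat b n"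
    and N: "N \<in> carrier_mat n n" and sol: "N + G * (P * (Q * N)) = G"
  shows "G - G * P * the (mat_inverse (1\<^sub>m b + Q * G * P)) * Q * G = N"
proof -
  define X where "X = the (mat_inverse (1\<^sub>m b + Q * G * P))"
  have X: "X \<in> carrier_mat b b" and XQG: "X * (Q * G) = Q * N"
    using mat_inverse_push_through[OF assms] unfolding X_def by auto
  have GP: "G * P \<in> carrier_mat n b" and GPX: "G * P * X \<in> carrier_mat n b"
    using G P X by auto
  have "G * P * X * Q * G = (G * P) * (X * (Q * G))"
    using assoc_mult_mat[OF GPX Q G] assoc_mult_mat[OF GP X, of "Q * G" n] Q G by auto
  also have "\<dots> = G * (P * (Q * N))"
    unfolding XQG using G P Q N by (simp add: assoc_mult_mat[of G n n P b "Q * N" n])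
  finally have "G - G * P * X * Q * G = (N + G * (P * (Q * N))) - G * (P * (Q * N))"
    by (subst (1) sol[symmetric]) simp
  also have "\<dots> = N"
    using N G P Q by (intro eq_matI) auto
  finally show ?thesis
    unfolding X_def .
qed

lemma solution_via_pseudo_inverse:
  fixes G L K N J :: "'a::field mat"
  assumes carrier: "G \<in> carrier_mat n n" "L \<in> carrier_mat n n" "K \<in> carrier_mat n n"
      "N \<in> carrier_mat n n" "J \<in> carrier_mat n n"
    and GL: "G * L = 1\<^sub>m n - s \<cdot>\<^sub>m J" and GJ: "G * J = 0\<^sub>m n n"
    and JN: "J * N = 0\<^sub>m n n" and LKN: "(L + K) * N = 1\<^sub>m n - s \<cdot>\<^sub>m J"
  shows "N + G * (K * N) = G"
proof -
  have "G * ((L + K) * N) = G * (L * N) + G * (K * N)"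
    using carrier by (simp add: add_mult_distrib_mat) (intro mult_add_distrib_mat, auto)
  also have "G * (L * N) = (G * L) * N"
    using carrier by simp
  also have "(G * L) * N = 1\<^sub>m n * N - s \<cdot>\<^sub>m (J * N)"
    unfolding GL using carrier by (simp add: minus_mult_distrib_mat[of _ n n] mult_smult_assoc_mat)
  also have "\<dots> = N"
    unfolding JN using carrier by (intro eq_matI) auto
  finally have "G * ((L + K) * N) = N + G * (K * N)" .
  moreover have "G * ((L + K) * N) = G * 1\<^sub>m n - s \<cdot>\<^sub>m (G * J)"
    unfolding LKN using carrier
    by (simp add: mult_minus_distrib_mat[of G n n "1\<^sub>m n" n "s \<cdot>\<^sub>m J"] mult_smult_distrib)
  moreover have "G * 1\<^sub>m n - s \<cdot>\<^sub>m (G * J) = G"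
    unfolding GJ using carrier by (intro eq_matI) auto
  ultimately show ?thesis
    by simp
qed

section \<open>The cycle Laplacian and its group inverse\<close>

definition cycle_laplacian :: "nat \<Rightarrow> real \<Rightarrow> real mat" where
  "cycle_laplacian n c = mat n n (\<lambda>(x, z). c * ((if z = x then 2 else 0)
     - (if z = (x + 1) mod n then 1 else 0) - (if x = (z + 1) mod n then 1 else 0)))"

definition all_ones_mat :: "nat \<Rightarrow> real mat" where
  "all_ones_mat n = mat n n (\<lambda>_. 1)"

lemma cycle_laplacian_carrier [simp]: "cycle_laplacian n c \<in> carrier_mat n n"
  by (simp add: cycle_laplacian_def)

lemma all_ones_mat_carrier [simp]: "all_ones_mat n \<in> carrier_mat n n"
  by (simp add: all_ones_mat_def)

lemma Gmat_carrier [simp]: "Gmat n c \<in> carrier_mat n n"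
  by (simp add: Gmat_def)

lemma mod_succ_eq_iff_mod_pred_eq:
  fixes x z n :: nat
  assumes "z < n" "x < n"
  shows "x = (z + 1) mod n \<longleftrightarrow> z = (x + n - 1) mod n"
proof -
  have succ: "(z + 1) mod n = (if z + 1 = n then 0 else z + 1)"
    using assms(1) by auto
  have pred: "(x + n - 1) mod n = (if x = 0 then n - 1 else x - 1)"
  proof (cases "x = 0")
    case True
    then show ?thesis
      using assms(2) by simp
  next
    case False
    then have "(x + n - 1) mod n = ((x - 1) + n) mod n"
      by simp
    also have "\<dots> = x - 1"
      using assms(2) by simp
    finally show ?thesis
      using False by simp
  qed
  show ?thesis
    unfolding succ pred using assms by auto
qed

lemma cycle_laplacian_index:
  assumes "x < n" "z < n"
  shows "cycle_laplacian n c $$ (x, z) = c * ((if z = x then 2 else 0)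
     - (if z = (x + 1) mod n then 1 else 0) - (if z = (x + n - 1) mod n then 1 else 0))"
  using assms unfolding cycle_laplacian_def
  by (simp only: index_mat split mod_succ_eq_iff_mod_pred_eq[OF assms(2,1)] refl if_True)

lemma cycle_laplacian_symmetric:
  assumes "x < n" "z < n"
  shows "cycle_laplacian n c $$ (z, x) = cycle_laplacian n c $$ (x, z)"
  using assms unfolding cycle_laplacian_def by (cases "x = z") (simp_all add: algebra_simps)

lemma sum_cycle_laplacian_mult:
  assumes "x < n"
  shows "(\<Sum>z<n. cycle_laplacian n c $$ (x, z) * f z)
    = c * (2 * f x - f ((x + 1) mod n) - f ((x + n - 1) mod n))"
proof -
  have n: "n > 0" "(x + 1) mod n < n" "(x + n - 1) mod n < n"
    using assms by auto
  have "(\<Sum>z<n. cycle_laplacian n c $$ (x, z) * f z)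
      = c * (2 * (\<Sum>z<n. (if z = x then 1 else 0) * f z)
          - (\<Sum>z<n. (if z = (x + 1) mod n then 1 else 0) * f z)
          - (\<Sum>z<n. (if z = (x + n - 1) mod n then 1 else 0) * f z))"
    unfolding sum_distrib_left sum_subtractf[symmetric]
    by (rule sum.cong) (auto simp: cycle_laplacian_index assms algebra_simps)
  then show ?thesis
    by (simp only: sum_lessThan_indicator n assms)
qed

definition arc_product :: "nat \<Rightarrow> int \<Rightarrow> real" where
  "arc_product n v = of_int v * (real n - of_int v)"

lemma arc_product_abs_eq_mod:
  assumes "\<bar>v\<bar> < int n"
  shows "arc_product n \<bar>v\<bar> = arc_product n (v mod int n)"
proof (cases "v \<ge> 0")
  case False
  have "v mod int n = (v + int n) mod int n"
    by simp
  also have "\<dots> = v + int n"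
    using assms False by (intro mod_pos_pos_trivial) auto
  finally have "v mod int n = v + int n" .
  with False show ?thesis
    by (simp add: arc_product_def algebra_simps)
qed (use assms in \<open>simp\<close>)

definition cycle_green :: "nat \<Rightarrow> real \<Rightarrow> int \<Rightarrow> real" where
  "cycle_green n c v = (real n ^ 2 - 1 - 6 * arc_product n v) / (12 * c * real n)"

lemma Gmat_index_abs:
  assumes "x < n" "y < n"
  shows "Gmat n c $$ (x, y) = cycle_green n c \<bar>int x - int y\<bar>"
  using assms by (simp add: Gmat_def cycle_green_def arc_product_def)

lemma Gmat_index:
  assumes "x < n" "y < n"
  shows "Gmat n c $$ (x, y) = cycle_green n c ((int x - int y) mod int n)"
  using assms arc_product_abs_eq_mod[of "int x - int y" n]
  by (simp add: Gmat_index_abs cycle_green_def)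

lemma Gmat_symmetric:
  assumes "x < n" "y < n"
  shows "Gmat n c $$ (y, x) = Gmat n c $$ (x, y)"
  using assms by (simp add: Gmat_def abs_minus_commute)

lemma cycle_green_second_difference:
  assumes "n \<ge> 2" "c \<noteq> 0" "0 \<le> v" "v < int n"
  shows "c * (2 * cycle_green n c v - cycle_green n c ((v + 1) mod int n)
    - cycle_green n c ((v - 1) mod int n)) = (if v = 0 then 1 else 0) - 1 / real n"
proof -
  have succ: "cycle_green n c ((v + 1) mod int n) = cycle_green n c (v + 1)"
    using assms by (cases "v + 1 = int n") (auto simp: cycle_green_def arc_product_def)
  have pred: "(v - 1) mod int n = (if v = 0 then int n - 1 else v - 1)"
    using assms by (auto simp: zmod_minus1)
  show ?thesis
    unfolding succ pred using assms by (auto simp: cycle_green_def arc_product_def field_simps)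
qed

lemma Gmat_second_difference:
  assumes "n \<ge> 2" "c \<noteq> 0" "x < n" "y < n"
  shows "c * (2 * Gmat n c $$ (x, y) - Gmat n c $$ ((x + 1) mod n, y)
    - Gmat n c $$ ((x + n - 1) mod n, y)) = (if x = y then 1 else 0) - 1 / real n"
proof -
  define v where "v = (int x - int y) mod int n"
  have v: "0 \<le> v" "v < int n"
    using assms unfolding v_def by auto
  have "(int ((x + 1) mod n) - int y) mod int n = (v + 1) mod int n"
    unfolding v_def by (simp add: of_nat_mod mod_simps algebra_simps)
  then have succ: "Gmat n c $$ ((x + 1) mod n, y) = cycle_green n c ((v + 1) mod int n)"
    using assms by (simp add: Gmat_index)
  have "(int ((x + n - 1) mod n) - int y) mod int n = (v - 1) mod int n"
  proof -
    have "int (x + n - 1) - int y = (int x - int y - 1) + int n"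
      using assms by simp
    then have "(int (x + n - 1) - int y) mod int n = (int x - int y - 1) mod int n"
      by (simp only: mod_add_self2)
    then show ?thesis
      unfolding v_def by (simp add: of_nat_mod mod_diff_left_eq)
  qed
  then have pred: "Gmat n c $$ ((x + n - 1) mod n, y) = cycle_green n c ((v - 1) mod int n)"
    using assms by (simp add: Gmat_index)
  have "v = 0 \<longleftrightarrow> int x mod int n = int y mod int n"
    unfolding v_def by (simp add: mod_eq_dvd_iff dvd_eq_mod_eq_0)
  also have "\<dots> \<longleftrightarrow> x = y"
    using assms by simp
  finally have "v = 0 \<longleftrightarrow> x = y" .
  moreover have "Gmat n c $$ (x, y) = cycle_green n c v"
    using assms unfolding v_def by (simp add: Gmat_index)
  ultimately show ?thesis
    unfolding succ pred using cycle_green_second_difference[OF assms(1,2) v] by simp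
qed

lemma Gmat_row_sum:
  assumes "n > 0" "x < n"
  shows "(\<Sum>z<n. Gmat n c $$ (x, z)) = 0"
proof -
  have numerator: "real n * (real n ^ 2 - 1) - 6 * (real n * (\<Sum>z<n. real z) - (\<Sum>z<n. (real z)^2)) = 0"
    unfolding sum_of_nat_lessThan sum_of_nat_square_lessThan by (simp add: field_simps power2_eq_square)
  have "(\<Sum>z<n. Gmat n c $$ (x, z)) = (\<Sum>z<n. cycle_green n c (int (nat ((int x - int z) mod int n))))"
    using assms by (intro sum.cong) (simp_all add: Gmat_index)
  also have "\<dots> = (\<Sum>z<n. cycle_green n c (int z))"
    by (rule sum_lessThan_mod_reflect[OF assms(1)])
  also have "\<dots> = (\<Sum>z<n. (real n ^ 2 - 1 - 6 * (real n * real z - (real z)^2)) / (12 * c * real n))"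
    by (simp add: cycle_green_def arc_product_def algebra_simps power2_eq_square)
  also have "\<dots> = (real n * (real n ^ 2 - 1) - 6 * (real n * (\<Sum>z<n. real z) - (\<Sum>z<n. (real z)^2)))
      / (12 * c * real n)"
    by (simp add: sum_subtractf sum_distrib_left flip: sum_divide_distrib)
  also have "\<dots> = 0"
    by (simp only: numerator div_0)
  finally show ?thesis .
qed

lemma Gmat_column_sum:
  assumes "n > 0" "y < n"
  shows "(\<Sum>x<n. Gmat n c $$ (x, y)) = 0"
proof -
  have "(\<Sum>x<n. Gmat n c $$ (x, y)) = (\<Sum>x<n. Gmat n c $$ (y, x))"
  proof (rule sum.cong[OF refl])
    fix x
    assume "x \<in> {..<n}"
    then show "Gmat n c $$ (x, y) = Gmat n c $$ (y, x)"
      using Gmat_symmetric[of y n x c] assms by simp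
  qed
  then show ?thesis
    using Gmat_row_sum[OF assms] by simp
qed

lemma Gmat_mult_cycle_laplacian:
  assumes "n \<ge> 2" "c \<noteq> 0"
  shows "Gmat n c * cycle_laplacian n c = 1\<^sub>m n - (1 / real n) \<cdot>\<^sub>m all_ones_mat n"
proof (rule eq_matI)
  fix x y
  assume "x < dim_row (1\<^sub>m n - (1 / real n) \<cdot>\<^sub>m all_ones_mat n)"
     and "y < dim_col (1\<^sub>m n - (1 / real n) \<cdot>\<^sub>m all_ones_mat n)"
  then have xy: "x < n" "y < n"
    by (simp_all add: all_ones_mat_def)
  have "(Gmat n c * cycle_laplacian n c) $$ (x, y) = (\<Sum>z<n. Gmat n c $$ (x, z) * cycle_laplacian n c $$ (z, y))"
    by (rule index_mult_mat_sum[OF Gmat_carrier cycle_laplacian_carrier xy])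
  also have "\<dots> = (\<Sum>z<n. cycle_laplacian n c $$ (y, z) * Gmat n c $$ (z, x))"
  proof (rule sum.cong)
    fix z
    assume "z \<in> {..<n}"
    then show "Gmat n c $$ (x, z) * cycle_laplacian n c $$ (z, y) = cycle_laplacian n c $$ (y, z) * Gmat n c $$ (z, x)"
      using Gmat_symmetric[of x n z] cycle_laplacian_symmetric[of y n z] xy by simp
  qed simp
  also have "\<dots> = (if y = x then 1 else 0) - 1 / real n"
    unfolding sum_cycle_laplacian_mult[OF xy(2)] by (rule Gmat_second_difference[OF assms xy(2,1)])
  finally show "(Gmat n c * cycle_laplacian n c) $$ (x, y) = (1\<^sub>m n - (1 / real n) \<cdot>\<^sub>m all_ones_mat n) $$ (x, y)"
    using xy by (auto simp: all_ones_mat_def)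
qed (auto simp: all_ones_mat_def Gmat_def cycle_laplacian_def)

lemma Gmat_mult_all_ones:
  assumes "n > 0"
  shows "Gmat n c * all_ones_mat n = 0\<^sub>m n n"
proof (rule eq_matI)
  fix x y
  assume "x < dim_row (0\<^sub>m n n :: real mat)" "y < dim_col (0\<^sub>m n n :: real mat)"
  then have xy: "x < n" "y < n"
    by auto
  then have "(Gmat n c * all_ones_mat n) $$ (x, y) = (\<Sum>z<n. Gmat n c $$ (x, z))"
    using index_mult_mat_sum[OF Gmat_carrier all_ones_mat_carrier] by (simp add: all_ones_mat_def)
  then show "(Gmat n c * all_ones_mat n) $$ (x, y) = (0\<^sub>m n n :: real mat) $$ (x, y)"
    using Gmat_row_sum[OF assms xy(1)] xy by simp
qed (auto simp: all_ones_mat_def Gmat_def)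

section \<open>The projection term \<open>\<Pi> \<Pi>\<^sup>T\<close>\<close>

lemma pairs_Suc: "pairs (Suc k) = pairs k @ map (\<lambda>i. (i, k)) [0..<k]"
  unfolding pairs_def by (simp add: map_concat)

lemma sum_pairs: "(\<Sum>p<length (pairs k). f (pairs k ! p)) = (\<Sum>j<k. \<Sum>i<j. f (i, j))"
proof -
  have "(\<Sum>p<length (pairs k). f (pairs k ! p)) = sum_list (map f (pairs k))"
    by (simp add: sum_list_sum_nth atLeast0LessThan)
  also have "\<dots> = (\<Sum>j<k. \<Sum>i<j. f (i, j))"
  proof (induction k)
    case (Suc k)
    have "sum_list (map (\<lambda>i. f (i, k)) [0..<k]) = (\<Sum>i<k. f (i, k))"
      by (simp add: sum_list_sum_nth atLeast0LessThan)
    with Suc show ?case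
      by (simp add: pairs_Suc comp_def)
  qed (simp add: pairs_def)
  finally show ?thesis .
qed

lemma length_pairs: "length (pairs k) = k choose 2"
proof -
  have "length (pairs k) = (\<Sum>j<k. \<Sum>i<j. (1::nat))"
    using sum_pairs[where k=k and f="\<lambda>_. (1::nat)"] by simp
  also have "\<dots> = k choose 2"
    by (induction k) (simp_all add: numeral_2_eq_2)
  finally show ?thesis .
qed

lemma sum_of_bool_eq: "(\<Sum>i<k. of_bool (i = \<alpha>) :: real) = of_bool (\<alpha> < (k::nat))"
  by (induction k) auto

lemma sum_of_bool_eq_mult: "(\<Sum>i<(k::nat). of_bool (i = \<alpha>) * of_bool (i = \<beta>) :: real) = of_bool (\<alpha> = \<beta> \<and> \<alpha> < k)"
proof -
  have "(\<Sum>i<k. of_bool (i = \<alpha>) * of_bool (i = \<beta>) :: real) = (\<Sum>i<k. of_bool (i = \<alpha>) * of_bool (\<alpha> = \<beta>))"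
    by (rule sum.cong) auto
  then show ?thesis
    by (simp add: sum_distrib_right[symmetric] sum_of_bool_eq of_bool_conj)
qed

text \<open>The Laplacian of the complete graph on \<open>k\<close> vertices, written as a sum over its edges.\<close>

lemma sum_pairs_of_bool_diff:
  "(\<Sum>j<(k::nat). \<Sum>i<j. (of_bool (i = \<alpha>) - of_bool (j = \<alpha>)) * (of_bool (i = \<beta>) - of_bool (j = \<beta>)))
    = (if \<alpha> < k \<and> \<beta> < k then of_bool (\<alpha> = \<beta>) * real k - 1 else (0::real))"
proof (induction k)
  case (Suc k)
  have "(\<Sum>i<k. (of_bool (i = \<alpha>) - of_bool (k = \<alpha>)) * (of_bool (i = \<beta>) - of_bool (k = \<beta>)))
      = (\<Sum>i<k. of_bool (i = \<alpha>) * of_bool (i = \<beta>)) - of_bool (k = \<beta>) * (\<Sum>i<k. of_bool (i = \<alpha>))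
        - of_bool (k = \<alpha>) * (\<Sum>i<k. of_bool (i = \<beta>)) + real k * (of_bool (k = \<alpha>) * of_bool (k = \<beta>))"
    by (simp add: algebra_simps sum.distrib sum_subtractf sum_distrib_left)
  also have "\<dots> = of_bool (\<alpha> = \<beta> \<and> \<alpha> < k) - of_bool (k = \<beta>) * of_bool (\<alpha> < k)
      - of_bool (k = \<alpha>) * of_bool (\<beta> < k) + real k * (of_bool (k = \<alpha>) * of_bool (k = \<beta>))"
    unfolding sum_of_bool_eq sum_of_bool_eq_mult ..
  finally have "(\<Sum>i<k. (of_bool (i = \<alpha>) - of_bool (k = \<alpha>)) * (of_bool (i = \<beta>) - of_bool (k = \<beta>))) = \<dots>" .
  moreover have "\<alpha> < Suc k \<longleftrightarrow> \<alpha> < k \<or> \<alpha> = k" "\<beta> < Suc k \<longleftrightarrow> \<beta> < k \<or> \<beta> = k"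
    by auto
  ultimately show ?case
    unfolding sum.lessThan_Suc Suc by (auto simp: of_bool_def)
qed simp

lemma Pimat_carrier [simp]: "Pimat m d a \<in> carrier_mat (m * d) (m choose 2)"
  by (simp add: Pimat_def)

lemma Pimat_index:
  assumes "r < m * d" "p < m choose 2" "pairs m ! p = (i, j)"
  shows "Pimat m d a $$ (r, p) = sqrt (a / real m) * (of_bool (r = i * d) - of_bool (r = j * d))"
  using assms by (simp add: Pimat_def)

lemma Pimat_mult_transpose_eq_sum_pairs:
  assumes "a \<ge> 0" "x < m * d" "w < m * d"
  shows "(Pimat m d a * transpose_mat (Pimat m d a)) $$ (x, w) = (a / real m) *
    (\<Sum>j<m. \<Sum>i<j. (of_bool (x = i * d) - of_bool (x = j * d)) * (of_bool (w = i * d) - of_bool (w = j * d)))"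
proof -
  define P where "P = Pimat m d a"
  define e where "e = (\<lambda>x i. of_bool (x = i * d) :: real)"
  have "(P * transpose_mat P) $$ (x, w) = (\<Sum>p<m choose 2. P $$ (x, p) * transpose_mat P $$ (p, w))"
    by (rule index_mult_mat_sum) (use assms in \<open>simp_all add: P_def\<close>)
  also have "\<dots> = (\<Sum>p<length (pairs m). (\<lambda>(i, j). (a / real m) * ((e x i - e x j) * (e w i - e w j))) (pairs m ! p))"
    unfolding length_pairs
  proof (rule sum.cong[OF refl])
    fix p
    assume p: "p \<in> {..<m choose 2}"
    obtain i j where ij: "pairs m ! p = (i, j)"
      by fastforce
    have "P $$ (x, p) * transpose_mat P $$ (p, w) = P $$ (x, p) * P $$ (w, p)"
      using assms p unfolding P_def by (simp add: Pimat_def)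
    also have "\<dots> = (sqrt (a / real m) * sqrt (a / real m)) * ((e x i - e x j) * (e w i - e w j))"
      using assms p ij unfolding P_def e_def by (simp add: Pimat_index ac_simps)
    also have "sqrt (a / real m) * sqrt (a / real m) = a / real m"
      using assms(1) by simp
    finally show "P $$ (x, p) * transpose_mat P $$ (p, w)
        = (\<lambda>(i, j). (a / real m) * ((e x i - e x j) * (e w i - e w j))) (pairs m ! p)"
      unfolding ij by simp
  qed
  also have "\<dots> = (a / real m) * (\<Sum>j<m. \<Sum>i<j. (e x i - e x j) * (e w i - e w j))"
    by (simp add: sum_pairs sum_distrib_left)
  finally show ?thesis
    unfolding P_def e_def .
qed

lemma of_bool_eq_mult_iff:
  fixes d :: nat
  assumes "d > 0"
  shows "of_bool (x = i * d) = of_bool (x mod d = 0) * (of_bool (i = x div d) :: real)"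
proof -
  have "x = i * d \<longleftrightarrow> x mod d = 0 \<and> i = x div d"
  proof
    assume "x mod d = 0 \<and> i = x div d"
    then show "x = i * d"
      using div_mult_mod_eq[of x d] by simp
  qed (use assms in simp)
  then show ?thesis
    by simp
qed

lemma Pimat_mult_transpose_index:
  assumes "a \<ge> 0" "x < m * d" "w < m * d"
  shows "(Pimat m d a * transpose_mat (Pimat m d a)) $$ (x, w)
     = (if x mod d = 0 \<and> w mod d = 0 then a * (of_bool (x = w) - 1 / real m) else 0)"
proof (cases "x mod d = 0 \<and> w mod d = 0")
  case True
  have "m * d > 0"
    using assms(2) by linarith
  then have d: "d > 0" and m: "m > 0"
    by simp_all
  have "x div d < m" "w div d < m"
    using assms d by (simp_all add: div_less_iff_less_mult)
  moreover have "x = w \<longleftrightarrow> x div d = w div d"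
    using True by (metis div_mult_mod_eq add_0_right)
  moreover have "of_bool (x = i * d) = (of_bool (i = x div d) :: real)" "of_bool (w = i * d) = (of_bool (i = w div d) :: real)"
    for i
    using of_bool_eq_mult_iff[OF d] True by simp_all
  then have "(\<Sum>j<m. \<Sum>i<j. (of_bool (x = i * d) - of_bool (x = j * d)) * (of_bool (w = i * d) - of_bool (w = j * d)))
      = (if x div d < m \<and> w div d < m then of_bool (x div d = w div d) * real m - 1 else (0::real))"
    by (simp only: sum_pairs_of_bool_diff)
  ultimately have S: "(\<Sum>j<m. \<Sum>i<j. (of_bool (x = i * d) - of_bool (x = j * d)) * (of_bool (w = i * d) - of_bool (w = j * d)))
      = of_bool (x = w) * real m - 1"
    by simp
  show ?thesis
    unfolding Pimat_mult_transpose_eq_sum_pairs[OF assms] S using True m by (simp add: field_simps)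
next
  case False
  then have Z: "(of_bool (x = i * d) - of_bool (x = j * d)) * (of_bool (w = i * d) - of_bool (w = j * d)) = (0::real)"
    for i j
    by auto
  show ?thesis
    unfolding Pimat_mult_transpose_eq_sum_pairs[OF assms] Z using False by auto
qed

lemma Pimat_mult_transpose_carrier:
  "Pimat m d a * transpose_mat (Pimat m d a) \<in> carrier_mat (m * d) (m * d)"
  using Pimat_carrier[of m d a] by (intro mult_carrier_mat[of _ _ "m choose 2"]) simp_all

lemma sum_Pimat_mult_transpose:
  assumes "a \<ge> 0" "x < m * d"
  shows "(\<Sum>z<m * d. (Pimat m d a * transpose_mat (Pimat m d a)) $$ (x, z) * f z)
    = (if x mod d = 0 then a * (f x - (1 / real m) * (\<Sum>j<m. f (j * d))) else 0)"
proof (cases "x mod d = 0")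
  case True
  have "(\<Sum>z<m * d. (Pimat m d a * transpose_mat (Pimat m d a)) $$ (x, z) * f z)
      = a * ((\<Sum>z<m * d. (if z = x then 1 else 0) * f z) - (1 / real m) * (\<Sum>z<m * d. of_bool (z mod d = 0) * f z))"
    unfolding sum_distrib_left sum_subtractf[symmetric]
    using True assms by (intro sum.cong) (auto simp: Pimat_mult_transpose_index algebra_simps)
  also have "(\<Sum>z<m * d. (if z = x then 1 else 0) * f z) = f x"
    by (rule sum_lessThan_indicator[OF assms(2)])
  also have "(\<Sum>z<m * d. of_bool (z mod d = 0) * f z) = (\<Sum>j<m. \<Sum>t<d. of_bool (t = 0) * f (j * d + t))"
    using assms(2) by (subst sum_lessThan_mult_blocks) (auto intro!: sum.cong)
  also have "\<dots> = (\<Sum>j<m. f (j * d))"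
  proof (rule sum.cong[OF refl])
    fix j
    have "d > 0"
      using assms(2) by (cases d) simp_all
    then show "(\<Sum>t<d. of_bool (t = 0) * f (j * d + t)) = f (j * d)"
      using sum_lessThan_indicator[of 0 d "\<lambda>t. f (j * d + t)"] by (simp add: of_bool_def)
  qed
  finally show ?thesis
    using True by simp
qed (use assms in \<open>simp add: Pimat_mult_transpose_index\<close>)

section \<open>Polynomial identities behind the block formula\<close>

text \<open>The bracket of the block formula, as a polynomial in indeterminates standing for the Chebyshev
  values: \<open>k\<close> is the block index counted from \<open>0\<close>, \<open>t = i - 1\<close> the row and \<open>h\<close> the column
  inside the block, \<open>Tm = T\<^sub>m(q)\<close>, \<open>Vk = V\<^sub>k(q)\<close>, \<open>Vmk = V\<^sub>m\<^sub>-\<^sub>1\<^sub>-\<^sub>k(q)\<close>, \<open>Ukm = U\<^sub>k\<^sub>-\<^sub>1(q)\<close>,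
  \<open>Umk = U\<^sub>m\<^sub>-\<^sub>1\<^sub>-\<^sub>k(q)\<close>, \<open>Vm1 = V\<^sub>m\<^sub>-\<^sub>1(q)\<close> and \<open>Um1 = U\<^sub>m\<^sub>-\<^sub>1(q)\<close>.\<close>

definition bracket_poly :: "real \<Rightarrow> real \<Rightarrow> real \<Rightarrow> real \<Rightarrow> real \<Rightarrow> real \<Rightarrow> real \<Rightarrow> real \<Rightarrow> real \<Rightarrow> real
    \<Rightarrow> real \<Rightarrow> real \<Rightarrow> real \<Rightarrow> real \<Rightarrow> real" where
  "bracket_poly n d a c Tm k t h Vk Vmk Ukm Umk Vm1 Um1 =
     (1 / (Tm - 1)) * (n * (h - t) * (Vk - Vmk) - ((a * n / c) * t * (h - d) - n * d) * (Ukm + Umk)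
       - (2 * c * d / a) * (Vm1 - 1) - d^2 * Um1)
     + d * h + n * h - n * d + (2 * (k + 1) * d - 3 * d + 2 * h - n) * t + (k + 1) * d * (n - 2 * h)
     - d^2 * k^2"

text \<open>Closed form of \<open>\<Sum>\<^sub>k bracket_poly \<dots> k \<dots>\<close> over the \<open>m\<close> blocks; \<open>SU\<close> stands for
  \<open>\<Sum>\<^sub>j\<^sub><\<^sub>m U\<^sub>j(q)\<close>.\<close>

definition bracket_poly_sum :: "real \<Rightarrow> real \<Rightarrow> real \<Rightarrow> real \<Rightarrow> real \<Rightarrow> real \<Rightarrow> real \<Rightarrow> real \<Rightarrow> real
    \<Rightarrow> real \<Rightarrow> real \<Rightarrow> real" where
  "bracket_poly_sum m n d a c Tm t h SU Vm1 Um1 =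
     (1 / (Tm - 1)) * (- ((a * n / c) * t * (h - d) - n * d) * (2 * SU - Um1)
       - m * (2 * c * d / a) * (Vm1 - 1) - m * d^2 * Um1)
     + m * (d * h + n * h - n * d) + (2 * h - d - n) * t * m + 2 * d * t * (m * (m - 1) / 2)
     + d * (n - 2 * h) * (m * (m - 1) / 2 + m) - d^2 * ((m - 1) * m * (2 * m - 1) / 6)"

definition block_arc_sum :: "real \<Rightarrow> real \<Rightarrow> real \<Rightarrow> real \<Rightarrow> real" where
  "block_arc_sum m n d h =
     (n - h) * (d * (m * (m - 1) / 2) + h * m) - d^2 * ((m - 1) * m * (2 * m - 1) / 6) - d * h * (m * (m - 1) / 2)"

lemma bracket_poly_affine:
  "bracket_poly n d a c Tm k t h Vk Vmk Ukm Umk Vm1 Um1 =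
     bracket_poly n d a c Tm k 0 h Vk Vmk Ukm Umk Vm1 Um1
     + t * (bracket_poly n d a c Tm k 1 h Vk Vmk Ukm Umk Vm1 Um1 - bracket_poly n d a c Tm k 0 h Vk Vmk Ukm Umk Vm1 Um1)"
  unfolding bracket_poly_def by (Groebner_Basis.algebra)

lemma bracket_poly_split:
  "bracket_poly n d a c Tm k t h Vk Vmk Ukm Umk Vm1 Um1 =
     ((1 / (Tm - 1)) * (- (2 * c * d / a) * (Vm1 - 1) - d^2 * Um1) + d * h + n * h - n * d
       + (2 * h - d - n) * t + d * (n - 2 * h))
     + k * (2 * d * t + d * (n - 2 * h)) - d^2 * k^2
     + (1 / (Tm - 1)) * (n * (h - t)) * (Vk - Vmk) - (1 / (Tm - 1)) * ((a * n / c) * t * (h - d) - n * d) * (Ukm + Umk)"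
  unfolding bracket_poly_def by (Groebner_Basis.algebra)

text \<open>The additive constants of \<open>smooth_part\<close> and of the block entries cancel in the equation at a
  block start.\<close>

lemma block_start_rearrange:
  fixes c n m a X0 X1 X2 K0 F C CS SP :: real
  assumes "c \<noteq> 0" "n \<noteq> 0" "m \<noteq> 0"
  shows "c * (2 * ((X0 + K0) / (2 * c * n)) - (X1 + K0) / (2 * c * n) - (X2 + K0) / (2 * c * n))
      + a * (((X0 - F) / (2 * c * n) + C) - (1 / m) * ((CS - SP) / (2 * c * n) + m * C))
    = c * (2 * X0 - X1 - X2) / (2 * c * n) + a * ((X0 - F) / (2 * c * n) - (1 / m) * ((CS - SP) / (2 * c * n)))"
  using assms by (simp add: field_simps)

text \<open>In the following identities the Chebyshev recurrences enter only through the arguments; the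
  hypotheses encode \<open>q = 1 + a d / (2 c)\<close>, \<open>T\<^sub>m = q U\<^sub>m\<^sub>-\<^sub>1 - U\<^sub>m\<^sub>-\<^sub>2\<close> and the closed form of \<open>SU\<close>.\<close>

locale bracket_identities =
  fixes m n d a c q e D T Um1 Um2 SU :: real
  assumes d_nz: "d \<noteq> 0" and c_nz: "c \<noteq> 0" and e_nz: "e \<noteq> 0" and D_nz: "D \<noteq> 0" and m_nz: "m \<noteq> 0"
    and n_eq: "n = m * d" and q_eq: "q = 1 + e" and a_eq: "a = 2 * c * e / d" and Um2_eq: "Um2 = q * Um1 - 1 - D"
    and T_eq: "T = 1 + D" and SU_eq: "SU = (2 * q * Um1 - Um2 - Um1 - 1) / (2 * e)"
begin

lemma bracket_poly_block_shift:
  "bracket_poly n d a c T k d h ((2 * q * u1 - u0) - u1) (w1 - w2) u1 w1 (Um1 - Um2) Um1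
     = bracket_poly n d a c T (k - 1) 0 h (u1 - u0) ((2 * q * w1 - w2) - w1) u0 (2 * q * w1 - w2) (Um1 - Um2) Um1"
  unfolding bracket_poly_def n_eq q_eq a_eq Um2_eq T_eq
  by (simp add: field_simps d_nz c_nz e_nz D_nz m_nz) (Groebner_Basis.algebra)

lemma bracket_poly_block_wrap:
  "bracket_poly n d a c T 0 d h 1 (Um1 - Um2) 0 Um1 (Um1 - Um2) Um1
     = bracket_poly n d a c T (m - 1) 0 h (Um1 - Um2) 1 Um2 1 (Um1 - Um2) Um1"
  unfolding bracket_poly_def n_eq q_eq a_eq Um2_eq T_eq
  by (simp add: field_simps d_nz c_nz e_nz D_nz m_nz) (Groebner_Basis.algebra)

lemma bracket_poly_block_start:
  "c * (2 * bracket_poly n d a c T k 0 h (u1 - u0) (w1 - w2) u0 w1 (Um1 - Um2) Um1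
        - bracket_poly n d a c T k 1 h (u1 - u0) (w1 - w2) u0 w1 (Um1 - Um2) Um1
        - bracket_poly n d a c T (k + 1) (d - 1) h ((2 * q * u1 - u0) - u1) (w2 - (2 * q * w2 - w1)) u1 w2
            (Um1 - Um2) Um1) / (2 * c * n)
   + a * ((bracket_poly n d a c T k 0 h (u1 - u0) (w1 - w2) u0 w1 (Um1 - Um2) Um1
            - (k * d + h) * (n - k * d - h)) / (2 * c * n)
        - (1 / m) * ((bracket_poly_sum m n d a c T 0 h SU (Um1 - Um2) Um1 - block_arc_sum m n d h) / (2 * c * n)))
   = 0"
  unfolding bracket_poly_def bracket_poly_sum_def block_arc_sum_def SU_eq Um2_eq n_eq q_eq a_eq T_eq
  by (simp add: field_simps d_nz c_nz e_nz D_nz m_nz) (Groebner_Basis.algebra)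

lemma bracket_poly_block_start_wrap:
  "c * (2 * bracket_poly n d a c T (m - 1) 0 h (Um1 - Um2) 1 Um2 1 (Um1 - Um2) Um1
        - bracket_poly n d a c T (m - 1) 1 h (Um1 - Um2) 1 Um2 1 (Um1 - Um2) Um1
        - bracket_poly n d a c T 0 (d - 1) h 1 (Um1 - Um2) 0 Um1 (Um1 - Um2) Um1) / (2 * c * n)
   + a * ((bracket_poly n d a c T (m - 1) 0 h (Um1 - Um2) 1 Um2 1 (Um1 - Um2) Um1
            - ((m - 1) * d + h) * (n - (m - 1) * d - h)) / (2 * c * n)
        - (1 / m) * ((bracket_poly_sum m n d a c T 0 h SU (Um1 - Um2) Um1 - block_arc_sum m n d h) / (2 * c * n)))
   = 0"
  unfolding bracket_poly_def bracket_poly_sum_def block_arc_sum_def SU_eq Um2_eq n_eq q_eq a_eq T_eq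
  by (simp add: field_simps d_nz c_nz e_nz D_nz m_nz) (Groebner_Basis.algebra)

lemma bracket_poly_sum_total:
  "d * bracket_poly_sum m n d a c T 0 h SU (Um1 - Um2) Um1
   + (d * (d - 1) / 2) * (bracket_poly_sum m n d a c T 1 h SU (Um1 - Um2) Um1
       - bracket_poly_sum m n d a c T 0 h SU (Um1 - Um2) Um1)
   + n * (d^2 - n^2) / 6 = 0"
  unfolding bracket_poly_sum_def SU_eq Um2_eq n_eq q_eq a_eq T_eq
  by (simp add: field_simps d_nz c_nz e_nz D_nz m_nz) (Groebner_Basis.algebra)

end

section \<open>The block matrix\<close>

locale cycle_blocks =
  fixes m d :: nat and a c :: real
  assumes m_ge_2: "m \<ge> 2" and d_ge_1: "d \<ge> 1" and a_pos: "a > 0" and c_pos: "c > 0"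
begin

definition q :: real where
  "q = a * real d / (2 * c) + 1"

definition Tm :: real where
  "Tm = chebT m q"

abbreviation U :: "int \<Rightarrow> real" where
  "U j \<equiv> chebU_int j q"

abbreviation V :: "int \<Rightarrow> real" where
  "V j \<equiv> chebV_int j q"

definition sumU :: real where
  "sumU = (\<Sum>j<m. U (int j))"

definition bracket :: "int \<Rightarrow> real \<Rightarrow> real \<Rightarrow> real" where
  "bracket k t h = bracket_poly (real m * real d) (real d) a c Tm (of_int k) t h
     (V k) (V (int m - 1 - k)) (U (k - 1)) (U (int m - 1 - k)) (V (int m - 1)) (U (int m - 1))"

abbreviation bracket_sum :: "real \<Rightarrow> real \<Rightarrow> real" where
  "bracket_sum t h \<equiv> bracket_poly_sum (real m) (real m * real d) (real d) a c Tm t h sumU (V (int m - 1)) (U (int m - 1))"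

abbreviation arc_sum :: "real \<Rightarrow> real" where
  "arc_sum h \<equiv> block_arc_sum (real m) (real m * real d) (real d) h"

lemma mult_ge_2: "m * d \<ge> 2"
  using m_ge_2 d_ge_1 by (metis le_trans mult.right_neutral mult_le_mono2)

lemma q_gt_one: "q > 1"
  using a_pos c_pos d_ge_1 unfolding q_def by (simp add: field_simps)

lemma Tm_gt_one: "Tm > 1"
  unfolding Tm_def using chebT_gt_one[OF q_gt_one] m_ge_2 by simp

lemma Tm_eq: "Tm = q * U (int m - 1) - U (int m - 2)"
proof -
  obtain l where l: "m = Suc l"
    using m_ge_2 by (cases m) auto
  then have i: "int m - 1 = int l" "int m - 2 = int l - 1"
    by auto
  have "Tm = chebT (Suc l) q"
    unfolding Tm_def using l by simp
  then show ?thesis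
    unfolding i using chebT_Suc_eq_chebU_int[of l q] by simp
qed

lemma sumU_eq: "sumU = (2 * q * U (int m - 1) - U (int m - 2) - U (int m - 1) - 1) / (2 * (q - 1))"
proof -
  have "sumU * (2 * (q - 1)) = U (int m) - U (int m - 1) - 1"
    unfolding sumU_def by (rule sum_chebU_int)
  moreover have "U (int m) = 2 * q * U (int m - 1) - U (int m - 2)"
    using chebU_int_rec'[of "int m" q] m_ge_2 by simp
  ultimately show ?thesis
    using q_gt_one by (simp add: field_simps)
qed

sublocale bracket_identities "real m" "real m * real d" "real d" a c q "q - 1" "Tm - 1" Tm
    "U (int m - 1)" "U (int m - 2)" sumU
  using d_ge_1 c_pos q_gt_one Tm_gt_one m_ge_2 Tm_eq sumU_eq by unfold_locales (auto simp: q_def field_simps)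

lemma V_eq: "V k = U k - U (k - 1)"
  by (simp add: chebV_int_def)

lemma bracket_affine: "bracket k t h = bracket k 0 h + t * (bracket k 1 h - bracket k 0 h)"
  unfolding bracket_def by (rule bracket_poly_affine)

lemma bracket_block_shift:
  assumes "1 \<le> k" "k \<le> int m - 1"
  shows "bracket k (real d) h = bracket (k - 1) 0 h"
proof -
  have rec: "U k = 2 * q * U (k - 1) - U (k - 2)"
      "U (int m - k) = 2 * q * U (int m - 1 - k) - U (int m - 2 - k)"
    using chebU_int_rec'[of k q] chebU_int_rec'[of "int m - k" q] assms by (simp_all add: algebra_simps)
  have i: "int m - 1 - k - 1 = int m - 2 - k" "k - 1 - 1 = k - 2" "int m - 1 - (k - 1) = int m - k"
      "int m - k - 1 = int m - 1 - k" "int m - 1 - 1 = int m - 2"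
    by auto
  have "bracket k (real d) h = bracket_poly (real m * real d) (real d) a c Tm (of_int k) (real d) h
      ((2 * q * U (k - 1) - U (k - 2)) - U (k - 1)) (U (int m - 1 - k) - U (int m - 2 - k))
      (U (k - 1)) (U (int m - 1 - k)) (U (int m - 1) - U (int m - 2)) (U (int m - 1))"
    unfolding bracket_def V_eq i rec(1) ..
  also have "\<dots> = bracket_poly (real m * real d) (real d) a c Tm (of_int k - 1) 0 h
      (U (k - 1) - U (k - 2)) ((2 * q * U (int m - 1 - k) - U (int m - 2 - k)) - U (int m - 1 - k))
      (U (k - 2)) (2 * q * U (int m - 1 - k) - U (int m - 2 - k)) (U (int m - 1) - U (int m - 2)) (U (int m - 1))"
    by (rule bracket_poly_block_shift)
  also have "\<dots> = bracket (k - 1) 0 h"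
    unfolding bracket_def V_eq i rec(2) by simp
  finally show ?thesis .
qed

lemma bracket_block_wrap: "bracket 0 (real d) h = bracket (int m - 1) 0 h"
proof -
  have i: "int m - 1 - 1 = int m - 2" "int m - 1 - (int m - 1) = 0"
    by auto
  have "bracket 0 (real d) h = bracket_poly (real m * real d) (real d) a c Tm 0 (real d) h 1
      (U (int m - 1) - U (int m - 2)) 0 (U (int m - 1)) (U (int m - 1) - U (int m - 2)) (U (int m - 1))"
    unfolding bracket_def V_eq i by simp
  also have "\<dots> = bracket_poly (real m * real d) (real d) a c Tm (real m - 1) 0 h
      (U (int m - 1) - U (int m - 2)) 1 (U (int m - 2)) 1 (U (int m - 1) - U (int m - 2)) (U (int m - 1))"
    by (rule bracket_poly_block_wrap)
  also have "\<dots> = bracket (int m - 1) 0 h"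
    unfolding bracket_def V_eq i by simp
  finally show ?thesis .
qed

lemma bracket_continuous:
  assumes "0 \<le> K" "K < int m"
  shows "bracket ((K - 1) mod int m) 0 h = bracket K (real d) h"
proof (cases "K = 0")
  case True
  then have "(K - 1) mod int m = int m - 1"
    using m_ge_2 by (simp add: zmod_minus1)
  with True show ?thesis
    using bracket_block_wrap by simp
next
  case False
  then have "(K - 1) mod int m = K - 1"
    using assms by simp
  with False show ?thesis
    using bracket_block_shift[of K] assms by simp
qed

lemma bracket_block_start:
  assumes "0 \<le> k" "k \<le> int m - 2"
  shows "c * (2 * bracket k 0 h - bracket k 1 h - bracket (k + 1) (real d - 1) h) / (2 * c * (real m * real d))
    + a * ((bracket k 0 h - (of_int k * real d + h) * (real m * real d - of_int k * real d - h))
        / (2 * c * (real m * real d))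
      - (1 / real m) * ((bracket_sum 0 h - arc_sum h) / (2 * c * (real m * real d)))) = 0"
proof -
  have rec: "U (k + 1) = 2 * q * U k - U (k - 1)"
      "U (int m - 3 - k) = 2 * q * U (int m - 2 - k) - U (int m - 1 - k)"
    using chebU_int_rec[of k q] chebU_int_rec[of "int m - 2 - k" q] assms by (simp_all add: algebra_simps)
  have i: "int m - 1 - k - 1 = int m - 2 - k" "k + 1 - 1 = k" "int m - 1 - (k + 1) = int m - 2 - k"
      "int m - 2 - k - 1 = int m - 3 - k" "int m - 1 - 1 = int m - 2"
    by auto
  have "bracket k t h = bracket_poly (real m * real d) (real d) a c Tm (of_int k) t h (U k - U (k - 1))
      (U (int m - 1 - k) - U (int m - 2 - k)) (U (k - 1)) (U (int m - 1 - k))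
      (U (int m - 1) - U (int m - 2)) (U (int m - 1))" for t
    unfolding bracket_def V_eq i ..
  moreover have "bracket (k + 1) (real d - 1) h = bracket_poly (real m * real d) (real d) a c Tm (of_int k + 1) (real d - 1) h
      ((2 * q * U k - U (k - 1)) - U k) (U (int m - 2 - k) - (2 * q * U (int m - 2 - k) - U (int m - 1 - k)))
      (U k) (U (int m - 2 - k)) (U (int m - 1) - U (int m - 2)) (U (int m - 1))"
    unfolding bracket_def V_eq i rec by simp
  moreover have "V (int m - 1) = U (int m - 1) - U (int m - 2)"
    unfolding V_eq i ..
  ultimately show ?thesis
    by (simp only:) (rule bracket_poly_block_start)
qed

lemma bracket_block_start_wrap:
  "c * (2 * bracket (int m - 1) 0 h - bracket (int m - 1) 1 h - bracket 0 (real d - 1) h) / (2 * c * (real m * real d))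
    + a * ((bracket (int m - 1) 0 h - ((real m - 1) * real d + h) * (real m * real d - (real m - 1) * real d - h))
        / (2 * c * (real m * real d))
      - (1 / real m) * ((bracket_sum 0 h - arc_sum h) / (2 * c * (real m * real d)))) = 0"
proof -
  have i: "int m - 1 - 1 = int m - 2" "int m - 1 - (int m - 1) = 0"
    by auto
  have "bracket (int m - 1) t h = bracket_poly (real m * real d) (real d) a c Tm (real m - 1) t h
      (U (int m - 1) - U (int m - 2)) 1 (U (int m - 2)) 1 (U (int m - 1) - U (int m - 2)) (U (int m - 1))" for t
    unfolding bracket_def V_eq i by simp
  moreover have "bracket 0 (real d - 1) h = bracket_poly (real m * real d) (real d) a c Tm 0 (real d - 1) h 1
      (U (int m - 1) - U (int m - 2)) 0 (U (int m - 1)) (U (int m - 1) - U (int m - 2)) (U (int m - 1))"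
    unfolding bracket_def V_eq i by simp
  moreover have "V (int m - 1) = U (int m - 1) - U (int m - 2)"
    unfolding V_eq i ..
  ultimately show ?thesis
    by (simp only:) (rule bracket_poly_block_start_wrap)
qed

lemma sum_bracket: "(\<Sum>j<m. bracket (int j) t h) = bracket_sum t h"
proof -
  define n Vm1 Um1 where "n = real m * real d" and "Vm1 = V (int m - 1)" and "Um1 = U (int m - 1)"
  define \<alpha> where "\<alpha> = (1 / (Tm - 1)) * (- (2 * c * real d / a) * (Vm1 - 1) - real d ^ 2 * Um1) + real d * h + n * h
    - n * real d + (2 * h - real d - n) * t + real d * (n - 2 * h)"
  define \<beta> \<gamma> \<delta> where "\<beta> = 2 * real d * t + real d * (n - 2 * h)" and "\<gamma> = (1 / (Tm - 1)) * (n * (h - t))"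
    and "\<delta> = (1 / (Tm - 1)) * ((a * n / c) * t * (h - real d) - n * real d)"
  have "(\<Sum>j<m. bracket (int j) t h) = (\<Sum>j<m. \<alpha> + real j * \<beta> - real d ^ 2 * real j ^ 2
      + \<gamma> * (V (int j) - V (int m - 1 - int j)) - \<delta> * (U (int j - 1) + U (int m - 1 - int j)))"
    unfolding bracket_def bracket_poly_split \<alpha>_def \<beta>_def \<gamma>_def \<delta>_def n_def Vm1_def Um1_def of_int_of_nat_eq ..
  also have "\<dots> = real m * \<alpha> + \<beta> * (\<Sum>j<m. real j) - real d ^ 2 * (\<Sum>j<m. real j ^ 2)
      + \<gamma> * ((\<Sum>j<m. V (int j)) - (\<Sum>j<m. V (int m - 1 - int j)))
      - \<delta> * ((\<Sum>j<m. U (int j - 1)) + (\<Sum>j<m. U (int m - 1 - int j)))"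
    by (simp add: sum.distrib sum_subtractf sum_distrib_left sum_distrib_right algebra_simps)
  also have "\<dots> = real m * \<alpha> + \<beta> * (real m * (real m - 1) / 2)
      - real d ^ 2 * ((real m - 1) * real m * (2 * real m - 1) / 6) - \<delta> * (2 * sumU - Um1)"
    using sum_lessThan_reflect[of "\<lambda>j. U j" m] sum_lessThan_reflect[of "\<lambda>j. V j" m]
    unfolding sum_of_nat_lessThan sum_of_nat_square_lessThan sum_chebU_int_pred sumU_def Um1_def by simp
  also have "\<dots> = bracket_poly_sum (real m) n (real d) a c Tm t h sumU Vm1 Um1"
    unfolding bracket_poly_sum_def \<alpha>_def \<beta>_def \<delta>_def by (Groebner_Basis.algebra)
  finally show ?thesis
    unfolding n_def Vm1_def Um1_def .
qed

lemma sum_sum_bracket: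
  "(\<Sum>k<m. \<Sum>t<d. bracket (int k) (real t) h) + real m * real d * (real d ^ 2 - (real m * real d) ^ 2) / 6 = 0"
proof -
  have "(\<Sum>k<m. \<Sum>t<d. bracket (int k) (real t) h)
      = (\<Sum>k<m. real d * bracket (int k) 0 h + (real d * (real d - 1) / 2) * (bracket (int k) 1 h - bracket (int k) 0 h))"
    by (subst bracket_affine) (simp only: sum_affine_lessThan)
  also have "\<dots> = real d * bracket_sum 0 h + (real d * (real d - 1) / 2) * (bracket_sum 1 h - bracket_sum 0 h)"
    by (simp only: sum.distrib sum_subtractf sum_distrib_left[symmetric] sum_bracket)
  also have "V (int m - 1) = U (int m - 1) - U (int m - 2)"
    by (simp add: V_eq algebra_simps)
  finally show ?thesis
    using bracket_poly_sum_total by simp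
qed

lemma sum_block_arc:
  "(\<Sum>j<m. (real j * real d + h) * (real m * real d - real j * real d - h)) = arc_sum h"
proof -
  have "(\<Sum>j<m. (real j * real d + h) * (real m * real d - real j * real d - h))
      = (\<Sum>j<m. h * (real m * real d - h) + real j * (real d * (real m * real d - h) - real d * h) - real d ^ 2 * real j ^ 2)"
    by (rule sum.cong) (auto simp: algebra_simps power2_eq_square)
  also have "\<dots> = real m * (h * (real m * real d - h)) + (real d * (real m * real d - h) - real d * h) * (\<Sum>j<m. real j)
      - real d ^ 2 * (\<Sum>j<m. real j ^ 2)"
    by (simp add: sum.distrib sum_subtractf sum_distrib_left sum_distrib_right algebra_simps)
  also have "\<dots> = arc_sum h"
    unfolding sum_of_nat_lessThan sum_of_nat_square_lessThan block_arc_sum_def by (Groebner_Basis.algebra)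
  finally show ?thesis .
qed

definition smooth_part :: "int \<Rightarrow> real \<Rightarrow> real \<Rightarrow> real" where
  "smooth_part k t h = (bracket k t h + (real d ^ 2 - (real m * real d) ^ 2) / 6) / (2 * c * (real m * real d))"

lemma blockEntry_eq_cycle_green_plus_smooth_part:
  assumes k: "k < m" and t: "t < d" and h: "h < d"
  shows "blockEntry m d a c (k + 1) (t + 1) h
    = cycle_green (m * d) c \<bar>int t - int k * int d - int h\<bar> + smooth_part (int k) (real t) (real h)"
proof -
  have i: "int (m - Suc k) = int m - 1 - int k" "int (m - 1) = int m - 1"
    using k m_ge_2 by auto
  have cheb: "chebV (k + 1 - 1) q = V (int k)"
      "chebV (m - (k + 1)) q = V (int m - 1 - int k)"
      "U (int (k + 1) - 2) = U (int k - 1)"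
      "chebU (m - (k + 1)) q = U (int m - 1 - int k)"
      "chebV (m - 1) q = V (int m - 1)"
      "chebU (m - 1) q = U (int m - 1)"
    using i by (simp_all add: chebV_eq_chebV_int algebra_simps del: chebU_int_of_nat flip: chebU_int_of_nat)
  have l: "real (nat \<bar>int (t + 1) - 1 - (int (k + 1) - 1) * int d - int h\<bar>) = of_int \<bar>int t - int k * int d - int h\<bar>"
    by simp
  have r: "real (k + 1) = real k + 1" "real (t + 1) = real t + 1" "real (m * d) = real m * real d"
    by auto
  show ?thesis
    unfolding blockEntry_def Let_def q_def[symmetric] Tm_def[symmetric] cheb l r
    unfolding bracket_def bracket_poly_def smooth_part_def cycle_green_def arc_product_def
    using c_pos m_ge_2 d_ge_1 by (simp add: field_simps)
qed

definition block_offset :: "nat \<Rightarrow> nat \<Rightarrow> nat" where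
  "block_offset s r = nat ((int s - int r) mod int m)"

definition candidate_entry :: "nat \<Rightarrow> nat \<Rightarrow> real" where
  "candidate_entry x y = blockEntry m d a c (block_offset (y div d) (x div d) + 1) (x mod d + 1) (y mod d)"

definition smooth_entry :: "nat \<Rightarrow> nat \<Rightarrow> real" where
  "smooth_entry x y = smooth_part (int (block_offset (y div d) (x div d))) (real (x mod d)) (real (y mod d))"

lemma block_offset_less: "block_offset s r < m"
  unfolding block_offset_def using m_ge_2 by (simp add: nat_less_iff)

lemma block_offset_int: "int (block_offset s r) = (int s - int r) mod int m"
  unfolding block_offset_def using m_ge_2 by simp

lemma block_offset_succ: "int (block_offset s ((r + 1) mod m)) = (int (block_offset s r) - 1) mod int m"
proof -
  have "int (block_offset s ((r + 1) mod m)) = (int s - (int r + 1) mod int m) mod int m"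
    unfolding block_offset_int by (simp add: of_nat_mod add.commute)
  also have "\<dots> = ((int s - int r) - 1) mod int m"
    by (simp add: mod_diff_right_eq algebra_simps)
  also have "\<dots> = ((int s - int r) mod int m - 1) mod int m"
    by (simp add: mod_diff_left_eq)
  finally show ?thesis
    unfolding block_offset_int .
qed

lemma block_offset_pred: "int (block_offset s ((r + m - 1) mod m)) = (int (block_offset s r) + 1) mod int m"
proof -
  have "int (r + m - 1) = (int r - 1) + int m"
    using m_ge_2 by simp
  then have "int (block_offset s ((r + m - 1) mod m)) = (int s - ((int r - 1) + int m) mod int m) mod int m"
    unfolding block_offset_int by (simp add: of_nat_mod)
  also have "\<dots> = (((int s - int r) + 1) - int m) mod int m"
    by (simp add: mod_diff_right_eq algebra_simps)
  also have "\<dots> = ((int s - int r) + 1) mod int m"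
    by (rule minus_mod_self2)
  also have "\<dots> = ((int s - int r) mod int m + 1) mod int m"
    by (simp add: mod_add_left_eq)
  finally show ?thesis
    unfolding block_offset_int .
qed

lemma cycle_green_block_offset:
  assumes x: "x < m * d" and y: "y < m * d"
  shows "cycle_green (m * d) c \<bar>int (x mod d) - int (block_offset (y div d) (x div d)) * int d - int (y mod d)\<bar>
    = cycle_green (m * d) c \<bar>int x - int y\<bar>"
proof -
  define r t s h where "r = x div d" and "t = x mod d" and "s = y div d" and "h = y mod d"
  define K where "K = block_offset s r"
  define v where "v = int t - int K * int d - int h"
  have Kd: "int K * int d = ((int s - int r) * int d) mod (int m * int d)"
    unfolding K_def block_offset_int by (simp add: mult_mod_left)
  have "v mod (int m * int d) = ((int t - int h) - ((int s - int r) * int d) mod (int m * int d)) mod (int m * int d)"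
    unfolding v_def Kd by (simp add: algebra_simps)
  also have "\<dots> = ((int t - int h) - (int s - int r) * int d) mod (int m * int d)"
    by (rule mod_diff_right_eq)
  also have "(int t - int h) - (int s - int r) * int d = int x - int y"
  proof -
    have "int x = int r * int d + int t" "int y = int s * int d + int h"
      unfolding r_def t_def s_def h_def by (simp_all flip: of_nat_mult of_nat_add)
    then show ?thesis
      by (simp add: algebra_simps)
  qed
  finally have vw: "v mod int (m * d) = (int x - int y) mod int (m * d)"
    by simp
  have "int K * int d \<le> (int m - 1) * int d"
    using block_offset_less[of s r] unfolding K_def by (intro mult_right_mono) auto
  then have "int K * int d \<le> int m * int d - int d"
    by (simp add: algebra_simps)
  moreover have "int m * int d \<ge> 2 * int d"
    using m_ge_2 by (intro mult_right_mono) auto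
  moreover have "int t < int d" "int h < int d" "int K * int d \<ge> 0"
    unfolding t_def h_def using d_ge_1 by auto
  ultimately have bv: "\<bar>v\<bar> < int (m * d)"
    unfolding v_def of_nat_mult abs_less_iff by linarith
  have bw: "\<bar>int x - int y\<bar> < int (m * d)"
    using x y by linarith
  have "cycle_green (m * d) c \<bar>v\<bar> = cycle_green (m * d) c \<bar>int x - int y\<bar>"
    unfolding cycle_green_def arc_product_abs_eq_mod[OF bv] arc_product_abs_eq_mod[OF bw] vw ..
  then show ?thesis
    unfolding v_def K_def r_def s_def t_def h_def .
qed

lemma candidate_entry_eq_Gmat_plus_smooth_entry:
  assumes x: "x < m * d" and y: "y < m * d"
  shows "candidate_entry x y = Gmat (m * d) c $$ (x, y) + smooth_entry x y"
proof -
  have th: "x mod d < d" "y mod d < d"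
    using d_ge_1 by simp_all
  show ?thesis
    unfolding candidate_entry_def blockEntry_eq_cycle_green_plus_smooth_part[OF block_offset_less th]
      cycle_green_block_offset[OF x y] Gmat_index_abs[OF x y] smooth_entry_def by simp
qed

lemma smooth_entry_block_row:
  assumes "r < m" "t < d"
  shows "smooth_entry (r * d + t) y = smooth_part (int (block_offset (y div d) r)) (real t) (real (y mod d))"
  using assms by (simp add: smooth_entry_def)

lemma smooth_entry_succ_row:
  assumes r: "r < m" and t: "t < d"
  shows "smooth_entry ((r * d + t + 1) mod (m * d)) y
    = smooth_part (int (block_offset (y div d) r)) (real t + 1) (real (y mod d))"
proof (cases "t + 1 < d")
  case True
  then have "(r * d + t + 1) mod (m * d) = r * d + (t + 1)"
    using row_succ_mod[OF r t] by simp
  then show ?thesis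
    using smooth_entry_block_row[OF r True] by (simp add: add.commute)
next
  case False
  define K where "K = int (block_offset (y div d) r)"
  have K: "0 \<le> K" "K < int m"
    unfolding K_def using block_offset_less by auto
  have "real d = real t + 1"
    using False t by simp
  have "(r * d + t + 1) mod (m * d) = ((r + 1) mod m) * d + 0"
    using row_succ_mod[OF r t] False by simp
  then have "smooth_entry ((r * d + t + 1) mod (m * d)) y
      = smooth_part (int (block_offset (y div d) ((r + 1) mod m))) 0 (real (y mod d))"
    using smooth_entry_block_row[of "(r + 1) mod m" 0 y] m_ge_2 d_ge_1 by simp
  also have "\<dots> = smooth_part ((K - 1) mod int m) 0 (real (y mod d))"
    unfolding block_offset_succ K_def ..
  also have "\<dots> = smooth_part K (real d) (real (y mod d))"
    unfolding smooth_part_def bracket_continuous[OF K] ..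
  also have "\<dots> = smooth_part K (real t + 1) (real (y mod d))"
    unfolding \<open>real d = real t + 1\<close> ..
  finally show ?thesis
    unfolding K_def .
qed

lemma smooth_entry_pred_row:
  assumes r: "r < m" and t: "t < d"
  shows "smooth_entry ((r * d + t + m * d - 1) mod (m * d)) y = (if t = 0
    then smooth_part ((int (block_offset (y div d) r) + 1) mod int m) (real d - 1) (real (y mod d))
    else smooth_part (int (block_offset (y div d) r)) (real t - 1) (real (y mod d)))"
proof (cases "t = 0")
  case True
  have "(r * d + t + m * d - 1) mod (m * d) = ((r + m - 1) mod m) * d + (d - 1)"
    using row_pred_mod[OF r t] True by simp
  then have "smooth_entry ((r * d + t + m * d - 1) mod (m * d)) y
      = smooth_part (int (block_offset (y div d) ((r + m - 1) mod m))) (real (d - 1)) (real (y mod d))"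
    using smooth_entry_block_row[of "(r + m - 1) mod m" "d - 1" y] m_ge_2 d_ge_1 by simp
  then show ?thesis
    unfolding block_offset_pred using True d_ge_1 by (simp add: of_nat_diff)
next
  case False
  have "(r * d + t + m * d - 1) mod (m * d) = r * d + (t - 1)"
    using row_pred_mod[OF r t] False by simp
  then show ?thesis
    using False smooth_entry_block_row[of r "t - 1" y] r t by (simp add: of_nat_diff)
qed

lemma smooth_part_second_difference: "2 * smooth_part K t h - smooth_part K (t + 1) h - smooth_part K (t - 1) h = 0"
  unfolding smooth_part_def bracket_affine[of K t] bracket_affine[of K "t + 1"] bracket_affine[of K "t - 1"]
  using c_pos m_ge_2 d_ge_1 by (simp add: field_simps)

lemma smooth_entry_inner_second_difference:
  assumes r: "r < m" and t: "1 \<le> t" "t < d"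
  shows "2 * smooth_entry (r * d + t) y - smooth_entry ((r * d + t + 1) mod (m * d)) y
    - smooth_entry ((r * d + t + m * d - 1) mod (m * d)) y = 0"
  unfolding smooth_entry_block_row[OF r t(2)] smooth_entry_succ_row[OF r t(2)] smooth_entry_pred_row[OF r t(2)]
  using smooth_part_second_difference[of "int (block_offset (y div d) r)" "real t" "real (y mod d)"] t by simp

lemma candidate_entry_block_start:
  assumes "j < m" "y < m * d"
  shows "candidate_entry (j * d) y = (bracket (int (block_offset (y div d) j)) 0 (real (y mod d))
      - (real (block_offset (y div d) j) * real d + real (y mod d))
        * (real m * real d - real (block_offset (y div d) j) * real d - real (y mod d))) / (2 * c * (real m * real d))
    + (real d ^ 2 - 1) / (12 * c * (real m * real d))"
proof -
  define K where "K = block_offset (y div d) j"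
  have d: "0 < d" "y mod d < d"
    using d_ge_1 by simp_all
  have "candidate_entry (j * d) y = blockEntry m d a c (K + 1) (0 + 1) (y mod d)"
    unfolding candidate_entry_def K_def using d by simp
  also have "\<dots> = cycle_green (m * d) c (int K * int d + int (y mod d)) + smooth_part (int K) 0 (real (y mod d))"
  proof -
    have "\<bar>int 0 - int K * int d - int (y mod d)\<bar> = int K * int d + int (y mod d)"
    proof -
      have "int K * int d \<ge> 0"
        by simp
      then show ?thesis
        by (subst abs_of_nonpos) linarith+
    qed
    then show ?thesis
      unfolding blockEntry_eq_cycle_green_plus_smooth_part[OF block_offset_less[of "y div d" j, folded K_def] d]
      by simp
  qed
  finally show ?thesis
    unfolding K_def[symmetric] cycle_green_def smooth_part_def arc_product_def
    using c_pos m_ge_2 d_ge_1 by (simp add: field_simps)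
qed

lemma sum_candidate_entry_block_starts:
  assumes y: "y < m * d"
  shows "(\<Sum>j<m. candidate_entry (j * d) y)
    = (bracket_sum 0 (real (y mod d)) - arc_sum (real (y mod d))) / (2 * c * (real m * real d))
      + real m * ((real d ^ 2 - 1) / (12 * c * (real m * real d)))"
proof -
  define h where "h = real (y mod d)"
  define f where "f = (\<lambda>k::nat. (bracket (int k) 0 h - (real k * real d + h) * (real m * real d - real k * real d - h))
    / (2 * c * (real m * real d)) + (real d ^ 2 - 1) / (12 * c * (real m * real d)))"
  have "(\<Sum>j<m. candidate_entry (j * d) y) = (\<Sum>j<m. f (nat ((int (y div d) - int j) mod int m)))"
    by (rule sum.cong[OF refl]) (simp add: candidate_entry_block_start y f_def h_def block_offset_def)
  also have "\<dots> = (\<Sum>k<m. f k)"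
    using m_ge_2 by (intro sum_lessThan_mod_reflect) simp
  also have "\<dots> = ((\<Sum>k<m. bracket (int k) 0 h)
      - (\<Sum>k<m. (real k * real d + h) * (real m * real d - real k * real d - h))) / (2 * c * (real m * real d))
      + real m * ((real d ^ 2 - 1) / (12 * c * (real m * real d)))"
    unfolding f_def by (simp add: sum.distrib sum_subtractf flip: sum_divide_distrib)
  finally show ?thesis
    unfolding sum_bracket sum_block_arc h_def by simp
qed

lemma smooth_entry_block_start_equation:
  assumes r: "r < m" and y: "y < m * d"
  shows "c * (2 * smooth_entry (r * d) y - smooth_entry ((r * d + 1) mod (m * d)) y - smooth_entry ((r * d + m * d - 1) mod (m * d)) y)
    + a * (candidate_entry (r * d) y - (1 / real m) * (\<Sum>j<m. candidate_entry (j * d) y)) = 0"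
proof -
  define K where "K = int (block_offset (y div d) r)"
  define h where "h = real (y mod d)"
  have d: "0 < d"
    using d_ge_1 by simp
  have K: "0 \<le> K" "K < int m"
    unfolding K_def using block_offset_less by auto
  have H: "smooth_entry (r * d) y = smooth_part K 0 h"
      "smooth_entry ((r * d + 1) mod (m * d)) y = smooth_part K 1 h"
      "smooth_entry ((r * d + m * d - 1) mod (m * d)) y = smooth_part ((K + 1) mod int m) (real d - 1) h"
    using smooth_entry_block_row[OF r d, of y] smooth_entry_succ_row[OF r d, of y] smooth_entry_pred_row[OF r d, of y]
    unfolding K_def h_def by simp_all
  have N: "candidate_entry (r * d) y = (bracket K 0 h - (of_int K * real d + h) * (real m * real d - of_int K * real d - h))
      / (2 * c * (real m * real d)) + (real d ^ 2 - 1) / (12 * c * (real m * real d))"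
    using candidate_entry_block_start[OF r y] unfolding K_def h_def by simp
  have nz: "c \<noteq> 0" "real m * real d \<noteq> 0" "real m \<noteq> 0"
    using c_pos d_ge_1 m_ge_2 by auto
  have E: "c * (2 * smooth_entry (r * d) y - smooth_entry ((r * d + 1) mod (m * d)) y - smooth_entry ((r * d + m * d - 1) mod (m * d)) y)
      + a * (candidate_entry (r * d) y - (1 / real m) * (\<Sum>j<m. candidate_entry (j * d) y))
    = c * (2 * bracket K 0 h - bracket K 1 h - bracket ((K + 1) mod int m) (real d - 1) h) / (2 * c * (real m * real d))
      + a * ((bracket K 0 h - (of_int K * real d + h) * (real m * real d - of_int K * real d - h)) / (2 * c * (real m * real d))
        - (1 / real m) * ((bracket_sum 0 h - arc_sum h) / (2 * c * (real m * real d))))"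
    unfolding H N sum_candidate_entry_block_starts[OF y] smooth_part_def h_def[symmetric]
    by (rule block_start_rearrange[OF nz])
  show ?thesis
  proof (cases "K \<le> int m - 2")
    case True
    then have "(K + 1) mod int m = K + 1"
      using K by simp
    with True show ?thesis
      unfolding E using bracket_block_start[OF K(1) True, of h] by simp
  next
    case False
    then have "K = int m - 1"
      using K by simp
    moreover have "of_int (int m - 1) = real m - 1"
      using m_ge_2 by simp
    ultimately show ?thesis
      unfolding E using bracket_block_start_wrap[of h] by simp
  qed
qed

lemma candidate_entry_column_sum:
  assumes y: "y < m * d"
  shows "(\<Sum>x<m * d. candidate_entry x y) = 0"
proof -
  define h where "h = real (y mod d)"
  have m: "m > 0" and n: "m * d > 0"
    using m_ge_2 d_ge_1 by simp_all
  have "(\<Sum>x<m * d. candidate_entry x y) = (\<Sum>x<m * d. Gmat (m * d) c $$ (x, y)) + (\<Sum>x<m * d. smooth_entry x y)"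
    by (simp add: candidate_entry_eq_Gmat_plus_smooth_entry y sum.distrib)
  also have "(\<Sum>x<m * d. Gmat (m * d) c $$ (x, y)) = 0"
    by (rule Gmat_column_sum[OF n y])
  also have "(\<Sum>x<m * d. smooth_entry x y) = (\<Sum>j<m. \<Sum>t<d. smooth_part (int (block_offset (y div d) j)) (real t) h)"
    unfolding sum_lessThan_mult_blocks h_def by (intro sum.cong refl) (simp add: smooth_entry_block_row)
  also have "\<dots> = (\<Sum>t<d. \<Sum>k<m. smooth_part (int k) (real t) h)"
    unfolding block_offset_def
    by (subst sum.swap) (intro sum.cong refl sum_lessThan_mod_reflect[OF m, where f="\<lambda>k. smooth_part (int k) _ h"])
  also have "\<dots> = ((\<Sum>k<m. \<Sum>t<d. bracket (int k) (real t) h) + real m * real d * ((real d ^ 2 - (real m * real d) ^ 2) / 6))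
      / (2 * c * (real m * real d))"
    unfolding smooth_part_def by (subst sum.swap) (simp add: sum.distrib flip: sum_divide_distrib)
  also have "\<dots> = 0"
    using sum_sum_bracket[of h] by (simp add: algebra_simps)
  finally show ?thesis
    by simp
qed

lemma candidate_entry_row_equation:
  assumes x: "x < m * d" and y: "y < m * d"
  shows "c * (2 * candidate_entry x y - candidate_entry ((x + 1) mod (m * d)) y - candidate_entry ((x + m * d - 1) mod (m * d)) y)
      + (if x mod d = 0 then a * (candidate_entry x y - (1 / real m) * (\<Sum>j<m. candidate_entry (j * d) y)) else 0)
    = of_bool (x = y) - 1 / real (m * d)"
proof -
  define r t where "r = x div d" and "t = x mod d"
  have r: "r < m" and t: "t < d" and x_eq: "x = r * d + t"
    using x d_ge_1 unfolding r_def t_def by (simp_all add: div_less_iff_less_mult)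
  note n = mult_ge_2
  then have "m * d > 0"
    by linarith
  then have nb: "(x + 1) mod (m * d) < m * d" "(x + m * d - 1) mod (m * d) < m * d"
    by simp_all
  have G: "c * (2 * Gmat (m * d) c $$ (x, y) - Gmat (m * d) c $$ ((x + 1) mod (m * d), y)
      - Gmat (m * d) c $$ ((x + m * d - 1) mod (m * d), y)) = of_bool (x = y) - 1 / real (m * d)"
    using Gmat_second_difference[OF n _ x y] c_pos by simp
  have H: "c * (2 * smooth_entry x y - smooth_entry ((x + 1) mod (m * d)) y - smooth_entry ((x + m * d - 1) mod (m * d)) y)
      + (if x mod d = 0 then a * (candidate_entry x y - (1 / real m) * (\<Sum>j<m. candidate_entry (j * d) y)) else 0) = 0"
  proof (cases "t = 0")
    case True
    then show ?thesis
      using smooth_entry_block_start_equation[OF r y] unfolding x_eq t_def[symmetric] by simp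
  next
    case False
    then show ?thesis
      using smooth_entry_inner_second_difference[OF r _ t, of y] t unfolding x_eq t_def[symmetric] by simp
  qed
  show ?thesis
    using G H unfolding candidate_entry_eq_Gmat_plus_smooth_entry[OF x y] candidate_entry_eq_Gmat_plus_smooth_entry[OF nb(1) y]
      candidate_entry_eq_Gmat_plus_smooth_entry[OF nb(2) y] by (simp add: algebra_simps)
qed

definition candidate_mat :: "real mat" where
  "candidate_mat = mat (m * d) (m * d) (\<lambda>(x, y). candidate_entry x y)"

lemma candidate_mat_carrier: "candidate_mat \<in> carrier_mat (m * d) (m * d)"
  by (simp add: candidate_mat_def)

lemma cycle_laplacian_plus_projection_mult_candidate_mat:
  "(cycle_laplacian (m * d) c + Pimat m d a * transpose_mat (Pimat m d a)) * candidate_mat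
    = 1\<^sub>m (m * d) - (1 / real (m * d)) \<cdot>\<^sub>m all_ones_mat (m * d)"
proof (rule eq_matI)
  fix x y
  assume "x < dim_row (1\<^sub>m (m * d) - (1 / real (m * d)) \<cdot>\<^sub>m all_ones_mat (m * d))"
    and "y < dim_col (1\<^sub>m (m * d) - (1 / real (m * d)) \<cdot>\<^sub>m all_ones_mat (m * d))"
  then have x: "x < m * d" and y: "y < m * d"
    by (simp_all add: all_ones_mat_def)
  define PP where "PP = Pimat m d a * transpose_mat (Pimat m d a)"
  have PP: "PP \<in> carrier_mat (m * d) (m * d)"
    unfolding PP_def by (rule Pimat_mult_transpose_carrier)
  have "((cycle_laplacian (m * d) c + PP) * candidate_mat) $$ (x, y)
      = (\<Sum>z<m * d. (cycle_laplacian (m * d) c + PP) $$ (x, z) * candidate_mat $$ (z, y))"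
    by (rule index_mult_mat_sum[OF _ candidate_mat_carrier x y]) (use PP in simp)
  also have "\<dots> = (\<Sum>z<m * d. cycle_laplacian (m * d) c $$ (x, z) * candidate_entry z y)
      + (\<Sum>z<m * d. PP $$ (x, z) * candidate_entry z y)"
    unfolding sum.distrib[symmetric] using x y PP by (intro sum.cong) (simp_all add: candidate_mat_def distrib_right)
  also have "\<dots> = of_bool (x = y) - 1 / real (m * d)"
    unfolding sum_cycle_laplacian_mult[OF x] PP_def sum_Pimat_mult_transpose[OF less_imp_le[OF a_pos] x]
    by (rule candidate_entry_row_equation[OF x y])
  finally show "((cycle_laplacian (m * d) c + Pimat m d a * transpose_mat (Pimat m d a)) * candidate_mat) $$ (x, y)
      = (1\<^sub>m (m * d) - (1 / real (m * d)) \<cdot>\<^sub>m all_ones_mat (m * d)) $$ (x, y)"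
    unfolding PP_def using x y by (simp add: all_ones_mat_def)
qed (simp_all add: candidate_mat_def all_ones_mat_def Pimat_def)

lemma all_ones_mult_candidate_mat: "all_ones_mat (m * d) * candidate_mat = 0\<^sub>m (m * d) (m * d)"
proof (rule eq_matI)
  fix x y
  assume "x < dim_row (0\<^sub>m (m * d) (m * d) :: real mat)" "y < dim_col (0\<^sub>m (m * d) (m * d) :: real mat)"
  then have x: "x < m * d" and y: "y < m * d"
    by simp_all
  have "(all_ones_mat (m * d) * candidate_mat) $$ (x, y) = (\<Sum>z<m * d. all_ones_mat (m * d) $$ (x, z) * candidate_mat $$ (z, y))"
    by (rule index_mult_mat_sum[OF all_ones_mat_carrier candidate_mat_carrier x y])
  also have "\<dots> = (\<Sum>z<m * d. candidate_entry z y)"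
    using x y by (intro sum.cong) (simp_all add: all_ones_mat_def candidate_mat_def)
  finally have "(all_ones_mat (m * d) * candidate_mat) $$ (x, y) = (\<Sum>z<m * d. candidate_entry z y)" .
  then show "(all_ones_mat (m * d) * candidate_mat) $$ (x, y) = (0\<^sub>m (m * d) (m * d) :: real mat) $$ (x, y)"
    using candidate_entry_column_sum[OF y] x y by simp
qed (simp_all add: candidate_mat_def all_ones_mat_def)

lemma Mmat_eq_candidate_mat: "Mmat m d a c = candidate_mat"
proof -
  define G P where "G = Gmat (m * d) c" and "P = Pimat m d a"
  note n = mult_ge_2
  have carrier: "G \<in> carrier_mat (m * d) (m * d)" "P \<in> carrier_mat (m * d) (m choose 2)"
      "transpose_mat P \<in> carrier_mat (m choose 2) (m * d)" "P * transpose_mat P \<in> carrier_mat (m * d) (m * d)"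
    unfolding G_def P_def using Pimat_mult_transpose_carrier by simp_all
  have "candidate_mat + G * ((P * transpose_mat P) * candidate_mat) = G"
    unfolding G_def P_def
    by (rule solution_via_pseudo_inverse[OF Gmat_carrier cycle_laplacian_carrier _ candidate_mat_carrier all_ones_mat_carrier
          Gmat_mult_cycle_laplacian[OF n] Gmat_mult_all_ones all_ones_mult_candidate_mat
          cycle_laplacian_plus_projection_mult_candidate_mat])
       (use c_pos n m_ge_2 d_ge_1 Pimat_mult_transpose_carrier in auto)
  then have "candidate_mat + G * (P * (transpose_mat P * candidate_mat)) = G"
    using carrier candidate_mat_carrier by (simp add: assoc_mult_mat[of P _ _ "transpose_mat P" _ candidate_mat])
  then show ?thesis
    unfolding Mmat_def Let_def G_def[symmetric] P_def[symmetric]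
    by (rule woodbury_by_solution[OF carrier(1-3) candidate_mat_carrier])
qed

lemma Mmat_block_index:
  assumes "r < m" "s < m" "t < d" "h < d"
  shows "Mmat m d a c $$ (r * d + t, s * d + h) = blockEntry m d a c (block_offset s r + 1) (t + 1) h"
proof -
  have "(r * d + t) div d = r" "(r * d + t) mod d = t" "(s * d + h) div d = s" "(s * d + h) mod d = h"
    using assms by simp_all
  moreover have "Mmat m d a c $$ (r * d + t, s * d + h) = candidate_entry (r * d + t) (s * d + h)"
    using block_row_less[OF assms(1,3)] block_row_less[OF assms(2,4)] by (simp add: Mmat_eq_candidate_mat candidate_mat_def)
  ultimately show ?thesis
    unfolding candidate_entry_def by simp
qed

end

theorem proposition4p6:
  fixes m d :: nat and a c :: real
  assumes "m \<ge> 2" and "d \<ge> 1" and "a > 0" and "c > 0"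
  shows "Mmat m d a c \<in> carrier_mat (m * d) (m * d) \<and>
    (\<forall>r < m. \<forall>s < m. \<forall>i \<in> {1..d}. \<forall>h < d.
      Mmat m d a c $$ (r * d + (i - 1), s * d + h)
        = blockEntry m d a c (nat ((int s - int r) mod int m) + 1) i h)"
proof -
  interpret cycle_blocks m d a c
    using assms by unfold_locales
  show ?thesis
  proof (intro conjI allI impI ballI)
    show "Mmat m d a c \<in> carrier_mat (m * d) (m * d)"
      unfolding Mmat_eq_candidate_mat by (rule candidate_mat_carrier)
  next
    fix r s i h
    assume "r < m" "s < m" "i \<in> {1..d}" "h < d"
    moreover from this have "i - 1 < d"
      by auto
    ultimately show "Mmat m d a c $$ (r * d + (i - 1), s * d + h)
        = blockEntry m d a c (nat ((int s - int r) mod int m) + 1) i h"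
      using Mmat_block_index[of r s "i - 1" h] by (simp add: block_offset_def)
  qed
qed

end
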